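(* Let $\Omega\subset\mathbb{R}^d$ be a bounded open set, let $\{\delta_k\}$ be a decreasing sequence with $\delta_k\to0$ and $\delta_k\le\delta_0$, and let $D=\Omega\cup\{\mathbf{y}\in\mathbb{R}^d\setminus\Omega:\operatorname{dist}(\mathbf{y},\partial\Omega)<\delta_0\}$. Let the kernels $\gamma_{\delta_k}$ and the numbers $\underline{r}(n_{\delta_k})$ be as in the context, and assume $$\lim_{k\to\infty}\int_{\|\mathbf{z}\|_2\le\underline{r}(n_{\delta_k})}z_i^2\,\widetilde{\gamma}_{\delta_k}(\|\mathbf{z}\|_2)\,d\mathbf{z}=1,\qquad i=1,\dots,d.$$ Let $u\in H^1(D)$ be the extension by zero of a function in $H^1_0(\Omega)$. Then $$\lim_{k\to\infty}\int_D\int_D|u(\mathbf{y})-u(\mathbf{x})|^2\,\gamma_{\delta_k}(\mathbf{x},\mathbf{y})\,\chi_{\underline{r}(n_{\delta_k})}(\|\mathbf{y}-\mathbf{x}\|_2)\,d\mathbf{y}\,d\mathbf{x}=\int_D|\nabla u(\mathbf{x})|^2\,d\mathbf{x}.$$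
   Context: $B_\delta(\mathbf{x})=\{\mathbf{y}\in\mathbb{R}^d:\|\mathbf{y}-\mathbf{x}\|_2\le\delta\}$. Each kernel is $\gamma_\delta(\mathbf{x},\mathbf{y})=\widetilde{\gamma}_\delta(\|\mathbf{y}-\mathbf{x}\|_2)$ with $\widetilde{\gamma}_\delta\ge0$, $\widetilde{\gamma}_\delta(t)>0$ for $0\le t<\delta$, $\widetilde{\gamma}_\delta(t)=0$ for $t>\delta$, and $\int_{B_\delta(\mathbf{0})}z_i^2\widetilde{\gamma}_\delta(\|\mathbf{z}\|_2)d\mathbf{z}=1$ for $i=1,\dots,d$. For each $\delta$ and each point $\mathbf{x}$ a polytope $B_{\delta,n_{\delta,\mathbf{x}}}(\mathbf{x})\subset B_\delta(\mathbf{x})$ is given; $r_{\delta,\mathbf{x}}$ is the radius of the largest ball centered at $\mathbf{x}$ contained in it and $\underline{r}(n_\delta)=\inf_{\mathbf{x}\in\Omega}r_{\delta,\mathbf{x}}$. $\chi_r$ denotes the indicator function of $[0,r]$. *)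

theory Defs
  imports "HOL-Analysis.Analysis"
begin

definition partial_dir :: "'a::euclidean_space \<Rightarrow> ('a \<Rightarrow> real) \<Rightarrow> 'a \<Rightarrow> real" where
  "partial_dir i f = (\<lambda>x. frechet_derivative f (at x) i)"

definition C_inf :: "('a::euclidean_space \<Rightarrow> real) \<Rightarrow> bool" where
  "C_inf f \<longleftrightarrow> (\<forall>is. set is \<subseteq> Basis \<longrightarrow> (\<forall>x. foldr partial_dir is f differentiable (at x)))"

definition test_fun :: "'a::euclidean_space set \<Rightarrow> ('a \<Rightarrow> real) \<Rightarrow> bool" where
  "test_fun \<Omega> \<phi> \<longleftrightarrow> C_inf \<phi> \<and> compact (closure {x. \<phi> x \<noteq> 0}) \<and> closure {x. \<phi> x \<noteq> 0} \<subseteq> \<Omega>"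

definition grad :: "('a::euclidean_space \<Rightarrow> real) \<Rightarrow> 'a \<Rightarrow> 'a" where
  "grad f x = (\<Sum>i\<in>Basis. frechet_derivative f (at x) i *\<^sub>R i)"

(* u belongs to H^1_0(Omega) (closure of C_c^infinity(Omega) in the H^1 norm), with
   (weak) gradient g; u, g are functions on all of R^d *)
definition H10 :: "'a::euclidean_space set \<Rightarrow> ('a \<Rightarrow> real) \<Rightarrow> ('a \<Rightarrow> 'a) \<Rightarrow> bool" where
  "H10 \<Omega> u g \<longleftrightarrow> u \<in> borel_measurable lborel \<and> g \<in> borel_measurable lborel \<and>
     (\<exists>\<phi>. (\<forall>n. test_fun \<Omega> (\<phi> n)) \<and>
        ((\<lambda>n. \<integral>\<^sup>+ x. ennreal ((\<phi> n x - u x)\<^sup>2) \<partial>lborel) \<longlonglongrightarrow> 0) \<and>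
        ((\<lambda>n. \<integral>\<^sup>+ x. ennreal ((norm (grad (\<phi> n) x - g x))\<^sup>2) \<partial>lborel) \<longlonglongrightarrow> 0))"

definition inner_radius :: "'a::euclidean_space \<Rightarrow> 'a set \<Rightarrow> real" where
  "inner_radius x P = Sup {r. ball x r \<subseteq> P}"

end

theory Submission
  imports Defs
begin

(* For a compactly supported C^1 function w, Fubini and translation invariance give
   E_h(w) = int h(|z|) T(z) dz with T(z) = ||w(. + z) - w||^2.  A uniform Taylor expansion
   shows that T(z) agrees with Q(z) = int (grad w . z)^2 up to o(|z|^2), and repeated halving
   of the step (T(2z) <= 4 T(z), Q(2z) = 4 Q(z)) upgrades this to T <= Q everywhere.  Radial
   symmetry kills the mixed second moments of the kernel, so int h(|z|) Q(z) dz is the sum of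
   the i-th moments times ||d_i w||^2: moments <= 1 bound E_h(w) by ||grad w||^2, and moments
   tending to 1 with supports shrinking to 0 give E_{h_k}(w) --> ||grad w||^2.
   For u in H^1_0, take test functions phi_n --> u; Fatou bounds E_{h_k}(u - phi_n) by
   2 ||grad phi_n - g||^2 uniformly in k, and since sqrt E_h is a seminorm the limit passes to u.
   Restricting to D x D changes nothing, as u vanishes off Omega and the kernel only couples
   points at distance <= delta_0.  The polytopes enter only through the moment condition on
   r(n_delta). *)

definition C1_compact_support :: "('a::euclidean_space \<Rightarrow> real) \<Rightarrow> ('a \<Rightarrow> 'a) \<Rightarrow> bool" where
  "C1_compact_support w a \<longleftrightarrow> (\<forall>x. (w has_derivative (\<lambda>h. a x \<bullet> h)) (at x)) \<and> continuous_on UNIV a \<and>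
     (\<exists>R. \<forall>x. R < norm x \<longrightarrow> w x = 0 \<and> a x = 0)"

lemma C1_compact_support_continuous: "C1_compact_support w a \<Longrightarrow> continuous_on UNIV w"
  unfolding C1_compact_support_def
  by (meson continuous_at_imp_continuous_on has_derivative_continuous)

lemma C1_compact_support_measurable:
  assumes "C1_compact_support w a"
  shows "w \<in> borel_measurable borel" "a \<in> borel_measurable borel"
  using C1_compact_support_continuous[OF assms] assms unfolding C1_compact_support_def
  by (auto intro: borel_measurable_continuous_onI)

lemma C1_compact_support_bounded:
  assumes "C1_compact_support w a"
  obtains R M where "R \<ge> 0" "M \<ge> 0" "\<And>x. R < norm x \<Longrightarrow> w x = 0 \<and> a x = 0" "\<And>x. norm (a x) \<le> M"
proof -
  obtain R where R: "\<And>x. R < norm x \<Longrightarrow> w x = 0 \<and> a x = 0"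
    using assms unfolding C1_compact_support_def by blast
  have "continuous_on (cball 0 (max R 0)) a"
    using assms continuous_on_subset unfolding C1_compact_support_def by blast
  then have "compact (a ` cball 0 (max R 0))" by (rule compact_continuous_image[OF _ compact_cball])
  then obtain M where M: "\<And>y. y \<in> a ` cball 0 (max R 0) \<Longrightarrow> norm y \<le> M"
    using compact_imp_bounded bounded_iff by metis
  have "norm (a x) \<le> max M 0" for x
    using M[of "a x"] R[of x] by (cases "norm x \<le> max R 0") auto
  then show ?thesis using that[of "max R 0" "max M 0"] R by auto
qed

lemma C1_compact_support_diff:
  assumes "C1_compact_support w1 a1" "C1_compact_support w2 a2"
  shows "C1_compact_support (\<lambda>x. w1 x - w2 x) (\<lambda>x. a1 x - a2 x)"
proof -
  obtain R1 where R1: "\<And>x. R1 < norm x \<Longrightarrow> w1 x = 0 \<and> a1 x = 0"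
    using assms(1) unfolding C1_compact_support_def by blast
  obtain R2 where R2: "\<And>x. R2 < norm x \<Longrightarrow> w2 x = 0 \<and> a2 x = 0"
    using assms(2) unfolding C1_compact_support_def by blast
  have "((\<lambda>x. w1 x - w2 x) has_derivative (\<lambda>h. (a1 x - a2 x) \<bullet> h)) (at x)" for x
    using has_derivative_diff[of w1 "\<lambda>h. a1 x \<bullet> h" _ w2 "\<lambda>h. a2 x \<bullet> h"] assms
    unfolding C1_compact_support_def by (simp add: inner_diff_left)
  moreover have "continuous_on UNIV (\<lambda>x. a1 x - a2 x)"
    using assms unfolding C1_compact_support_def by (intro continuous_on_diff) auto
  moreover have "max R1 R2 < norm x \<Longrightarrow> w1 x - w2 x = 0 \<and> a1 x - a2 x = 0" for x
    using R1 R2 by auto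
  ultimately show ?thesis unfolding C1_compact_support_def by blast
qed

lemma C1_compact_support_uniform_remainder:
  assumes "C1_compact_support w a" "\<And>x. R < norm x \<Longrightarrow> w x = 0 \<and> a x = 0" "0 < \<epsilon>"
  obtains \<eta> where "0 < \<eta>" "\<And>x z. norm z < \<eta> \<Longrightarrow> \<bar>w (x + z) - w x - a x \<bullet> z\<bar> \<le> \<epsilon> * norm z"
    "\<And>x z. norm z < \<eta> \<Longrightarrow> R + 1 < norm x \<Longrightarrow> w (x + z) - w x - a x \<bullet> z = 0"
proof -
  have der: "\<And>x. (w has_derivative (\<lambda>h. a x \<bullet> h)) (at x)" and ca: "continuous_on UNIV a"
    using assms(1) unfolding C1_compact_support_def by auto
  have "uniformly_continuous_on (cball 0 (R + 2)) a"
    by (rule compact_uniformly_continuous[OF continuous_on_subset[OF ca] compact_cball]) auto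
  then obtain d where d: "d > 0" "\<And>x x'. x \<in> cball 0 (R + 2) \<Longrightarrow> x' \<in> cball 0 (R + 2) \<Longrightarrow>
      dist x' x < d \<Longrightarrow> dist (a x') (a x) < \<epsilon>"
    unfolding uniformly_continuous_on_def using assms(3) by metis
  define \<eta> where "\<eta> = min d 1"
  have mvt: "\<exists>s. 0 < s \<and> s < 1 \<and> w (x + z) - w x - a x \<bullet> z = (a (x + s *\<^sub>R z) - a x) \<bullet> z" for x z
  proof -
    have "DERIV (\<lambda>t. w (x + t *\<^sub>R z)) t :> a (x + t *\<^sub>R z) \<bullet> z" for t
    proof -
      have "((\<lambda>t. x + t *\<^sub>R z) has_derivative (\<lambda>s. s *\<^sub>R z)) (at t)"
        by (auto intro!: derivative_eq_intros)
      from has_derivative_compose[OF this der] show ?thesis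
        unfolding has_field_derivative_def by (simp add: mult.commute[of _ "a (x + t *\<^sub>R z) \<bullet> z"])
    qed
    from MVT2[of 0 1 "\<lambda>t. w (x + t *\<^sub>R z)", OF _ this] show ?thesis
      by (auto simp: inner_diff_left)
  qed
  have far: "w (x + z) - w x - a x \<bullet> z = 0" if "norm z < \<eta>" "R + 1 < norm x" for x z
  proof -
    have "norm x - norm z \<le> norm (x + z)" using norm_triangle_ineq[of "x + z" "- z"] by simp
    then show ?thesis using that assms(2)[of "x + z"] assms(2)[of x] unfolding \<eta>_def by auto
  qed
  have small: "\<bar>w (x + z) - w x - a x \<bullet> z\<bar> \<le> \<epsilon> * norm z" if z: "norm z < \<eta>" for x z
  proof (cases "norm x \<le> R + 1")
    case True
    obtain s where s: "0 < s" "s < 1" "w (x + z) - w x - a x \<bullet> z = (a (x + s *\<^sub>R z) - a x) \<bullet> z"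
      using mvt by blast
    have "norm (s *\<^sub>R z) \<le> norm z" using s by (simp add: mult_left_le_one_le)
    moreover have "norm (x + s *\<^sub>R z) \<le> norm x + norm (s *\<^sub>R z)" by (rule norm_triangle_ineq)
    ultimately have "x + s *\<^sub>R z \<in> cball 0 (R + 2)" "x \<in> cball 0 (R + 2)" "dist (x + s *\<^sub>R z) x < d"
      using True z unfolding \<eta>_def by (auto simp del: mem_cball simp: mem_cball_0 dist_norm)
    then have "norm (a (x + s *\<^sub>R z) - a x) \<le> \<epsilon>" using d(2) by (fastforce simp: dist_norm)
    then have "\<bar>(a (x + s *\<^sub>R z) - a x) \<bullet> z\<bar> \<le> \<epsilon> * norm z"
      using Cauchy_Schwarz_ineq2[of "a (x + s *\<^sub>R z) - a x" z] by (meson mult_right_mono norm_ge_zero order_trans)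
    then show ?thesis using s(3) by simp
  qed (use far[OF z] assms(3) in simp)
  show ?thesis using that[of \<eta>] d(1) small far unfolding \<eta>_def by auto
qed

lemma grad_eq_0_outside_support:
  fixes \<phi> :: "'a::euclidean_space \<Rightarrow> real"
  assumes "x \<notin> closure {x. \<phi> x \<noteq> 0}"
  shows "grad \<phi> x = 0"
proof -
  have "((\<lambda>_. 0) has_derivative (\<lambda>_. 0)) (at x)" by simp
  then have "(\<phi> has_derivative (\<lambda>_. 0)) (at x)"
    by (rule has_derivative_transform_within_open[of _ _ x UNIV "- closure {x. \<phi> x \<noteq> 0}"])
       (use assms closure_subset[of "{x. \<phi> x \<noteq> 0}"] in auto)
  then have "frechet_derivative \<phi> (at x) = (\<lambda>_. 0)" by (simp add: frechet_derivative_at[symmetric])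
  then show ?thesis unfolding grad_def by simp
qed

lemma has_derivative_grad:
  fixes \<phi> :: "'a::euclidean_space \<Rightarrow> real"
  assumes "\<phi> differentiable (at x)"
  shows "(\<phi> has_derivative (\<lambda>h. grad \<phi> x \<bullet> h)) (at x)"
proof -
  let ?L = "frechet_derivative \<phi> (at x)"
  have d: "(\<phi> has_derivative ?L) (at x)" using assms frechet_derivative_works by blast
  then have lin: "linear ?L" using has_derivative_linear by blast
  have "?L h = grad \<phi> x \<bullet> h" for h
  proof -
    have "?L h = ?L h \<bullet> 1" by simp
    also have "\<dots> = (\<Sum>i\<in>Basis. (h \<bullet> i) * (?L i \<bullet> 1))"
      by (rule Linear_Algebra.linear_componentwise[OF lin])
    also have "\<dots> = grad \<phi> x \<bullet> h" unfolding grad_def by (simp add: inner_sum_right mult.commute inner_commute)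
    finally show ?thesis .
  qed
  then show ?thesis using d by (metis (no_types, lifting) ext)
qed

lemma test_fun_C1_compact_support:
  fixes \<phi> :: "'a::euclidean_space \<Rightarrow> real"
  assumes "test_fun \<Omega> \<phi>"
  shows "C1_compact_support \<phi> (grad \<phi>)"
proof -
  have ci: "\<And>is x. set is \<subseteq> Basis \<Longrightarrow> foldr partial_dir is \<phi> differentiable (at x)"
    and cpt: "compact (closure {x. \<phi> x \<noteq> 0})"
    using assms unfolding test_fun_def C_inf_def by auto
  have "continuous_on UNIV (partial_dir i \<phi>)" if "i \<in> Basis" for i
    using ci[of "[i]"] that by (intro differentiable_imp_continuous_on differentiable_at_imp_differentiable_on) auto
  then have "continuous_on UNIV (\<lambda>x. \<Sum>i\<in>Basis. partial_dir i \<phi> x *\<^sub>R i)"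
    by (intro continuous_on_sum continuous_on_scaleR continuous_on_const) auto
  then have cont: "continuous_on UNIV (grad \<phi>)"
    unfolding grad_def[abs_def] partial_dir_def by simp
  obtain R where R: "\<And>x. x \<in> closure {x. \<phi> x \<noteq> 0} \<Longrightarrow> norm x \<le> R"
    using compact_imp_bounded[OF cpt] unfolding bounded_iff by blast
  have "\<phi> x = 0 \<and> grad \<phi> x = 0" if "R < norm x" for x
    using R[of x] that closure_subset[of "{x. \<phi> x \<noteq> 0}"] grad_eq_0_outside_support[of x \<phi>] by force
  moreover have "(\<phi> has_derivative (\<lambda>h. grad \<phi> x \<bullet> h)) (at x)" for x
    using has_derivative_grad[OF ci[of "[]"]] by simp
  ultimately show ?thesis unfolding C1_compact_support_def using cont by blast
qed

definition increment_energy :: "('a::euclidean_space \<Rightarrow> real) \<Rightarrow> 'a \<Rightarrow> ennreal" where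
  "increment_energy w z = (\<integral>\<^sup>+x. ennreal ((w (x + z) - w x)\<^sup>2) \<partial>lborel)"

definition directional_energy :: "('a::euclidean_space \<Rightarrow> 'a) \<Rightarrow> 'a \<Rightarrow> ennreal" where
  "directional_energy a z = (\<integral>\<^sup>+x. ennreal ((a x \<bullet> z)\<^sup>2) \<partial>lborel)"

lemma power2_add_perturbation:
  fixes A r M n \<epsilon> :: real
  assumes "\<bar>A\<bar> \<le> M * n" "\<bar>r\<bar> \<le> \<epsilon> * n" "0 \<le> \<epsilon>" "\<epsilon> \<le> 1" "0 \<le> M" "0 \<le> n"
  shows "\<bar>(A + r)\<^sup>2 - A\<^sup>2\<bar> \<le> (2 * M + 1) * \<epsilon> * n\<^sup>2"
proof -
  have "\<bar>2 * A + r\<bar> \<le> 2 * M * n + \<epsilon> * n" using assms by linarith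
  also have "\<dots> \<le> (2 * M + 1) * n" using assms by (simp add: algebra_simps mult_left_le_one_le)
  finally have "\<bar>r * (2 * A + r)\<bar> \<le> (\<epsilon> * n) * ((2 * M + 1) * n)"
    unfolding abs_mult by (rule mult_mono[OF assms(2)]) (use assms in auto)
  moreover have "(A + r)\<^sup>2 - A\<^sup>2 = r * (2 * A + r)" by (simp add: power2_eq_square algebra_simps)
  ultimately show ?thesis by (simp add: power2_eq_square mult_ac)
qed

lemma nn_integral_le_plus_indicator:
  fixes f g :: "'a \<Rightarrow> real"
  assumes [measurable]: "f \<in> borel_measurable M" "g \<in> borel_measurable M" "A \<in> sets M"
    and "\<And>x. f x \<le> g x + c * indicator A x" "\<And>x. g x \<ge> 0" "c \<ge> 0"
  shows "(\<integral>\<^sup>+x. ennreal (f x) \<partial>M) \<le> (\<integral>\<^sup>+x. ennreal (g x) \<partial>M) + ennreal c * emeasure M A"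
proof -
  have "ennreal (f x) \<le> ennreal (g x) + ennreal c * indicator A x" for x
    using ennreal_leI[OF assms(4)[of x]] assms(5,6) by (cases "x \<in> A") (simp_all add: ennreal_plus)
  then have "(\<integral>\<^sup>+x. ennreal (f x) \<partial>M) \<le> (\<integral>\<^sup>+x. ennreal (g x) + ennreal c * indicator A x \<partial>M)"
    by (intro nn_integral_mono)
  also have "\<dots> = (\<integral>\<^sup>+x. ennreal (g x) \<partial>M) + ennreal c * emeasure M A"
    by (simp add: nn_integral_add nn_integral_cmult_indicator)
  finally show ?thesis .
qed

text \<open>The Taylor remainder is \<open>o(norm z)\<close> uniformly in the base point and vanishes outside
  the ball of radius \<open>R + 1\<close>, so it integrates to \<open>o(norm z\<^sup>2)\<close>.\<close>

lemma increment_energy_asymptotic: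
  assumes C1: "C1_compact_support w a" and e: "e > 0"
  obtains \<eta> where "\<eta> > 0" "\<And>z. norm z < \<eta> \<Longrightarrow>
     increment_energy w z \<le> directional_energy a z + ennreal (e * (norm z)\<^sup>2) \<and>
     directional_energy a z \<le> increment_energy w z + ennreal (e * (norm z)\<^sup>2)"
proof -
  obtain R M where RM: "R \<ge> 0" "M \<ge> 0" "\<And>x. R < norm x \<Longrightarrow> w x = 0 \<and> a x = 0" "\<And>x. norm (a x) \<le> M"
    using C1_compact_support_bounded[OF C1] by blast
  have [measurable]: "w \<in> borel_measurable borel" "a \<in> borel_measurable borel"
    using C1_compact_support_measurable[OF C1] by auto
  define B where "B = cball (0::'a) (R + 1)"
  define V where "V = measure lborel B"
  have "emeasure lborel B < \<infinity>" unfolding B_def by (rule emeasure_lborel_cball_finite)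
  then have V: "emeasure lborel B = ennreal V" "V \<ge> 0"
    unfolding V_def by (simp_all add: emeasure_eq_ennreal_measure less_top[symmetric])
  define \<epsilon> where "\<epsilon> = min 1 (e / ((2 * M + 1) * (V + 1)))"
  have \<epsilon>: "0 < \<epsilon>" "\<epsilon> \<le> 1" "(2 * M + 1) * \<epsilon> * V \<le> e"
  proof -
    have "(2 * M + 1) * \<epsilon> * V \<le> (2 * M + 1) * (e / ((2 * M + 1) * (V + 1))) * (V + 1)"
      unfolding \<epsilon>_def using RM V e by (intro mult_mono) auto
    then show "(2 * M + 1) * \<epsilon> * V \<le> e" using RM V by simp
  qed (use RM V e in \<open>auto simp: \<epsilon>_def\<close>)
  obtain \<eta> where \<eta>: "\<eta> > 0" "\<And>x z. norm z < \<eta> \<Longrightarrow> \<bar>w (x + z) - w x - a x \<bullet> z\<bar> \<le> \<epsilon> * norm z"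
    "\<And>x z. norm z < \<eta> \<Longrightarrow> R + 1 < norm x \<Longrightarrow> w (x + z) - w x - a x \<bullet> z = 0"
    using C1_compact_support_uniform_remainder[OF C1 RM(3) \<epsilon>(1)] by blast
  have "increment_energy w z \<le> directional_energy a z + ennreal (e * (norm z)\<^sup>2) \<and>
     directional_energy a z \<le> increment_energy w z + ennreal (e * (norm z)\<^sup>2)" if z: "norm z < \<eta>" for z
  proof -
    define c where "c = (2 * M + 1) * \<epsilon> * (norm z)\<^sup>2"
    have "c * V \<le> e * (norm z)\<^sup>2"
      using mult_right_mono[OF \<epsilon>(3), of "(norm z)\<^sup>2"] by (simp add: c_def mult_ac)
    then have c: "c \<ge> 0" "ennreal c * emeasure lborel B \<le> ennreal (e * (norm z)\<^sup>2)"
      using RM \<epsilon> V by (auto simp: c_def ennreal_mult'[symmetric] intro!: ennreal_leI)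
    have "\<bar>(w (x + z) - w x)\<^sup>2 - (a x \<bullet> z)\<^sup>2\<bar> \<le> c * indicator B x" for x
    proof (cases "x \<in> B")
      case True
      have "\<bar>a x \<bullet> z\<bar> \<le> M * norm z"
        using Cauchy_Schwarz_ineq2[of "a x" z] RM(4)[of x] by (meson mult_right_mono norm_ge_zero order_trans)
      from power2_add_perturbation[OF this \<eta>(2)[OF z, of x]] show ?thesis
        using True \<epsilon> RM by (simp add: c_def)
    next
      case False
      then show ?thesis using \<eta>(3)[OF z, of x] c by (simp add: B_def)
    qed
    then have le1: "(w (x + z) - w x)\<^sup>2 \<le> (a x \<bullet> z)\<^sup>2 + c * indicator B x"
      and le2: "(a x \<bullet> z)\<^sup>2 \<le> (w (x + z) - w x)\<^sup>2 + c * indicator B x" for x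
      by (simp_all add: abs_le_iff add.commute diff_le_eq)
    have "increment_energy w z \<le> directional_energy a z + ennreal c * emeasure lborel B"
      unfolding increment_energy_def directional_energy_def
      by (rule nn_integral_le_plus_indicator[OF _ _ _ le1]) (auto simp: B_def c)
    moreover have "directional_energy a z \<le> increment_energy w z + ennreal c * emeasure lborel B"
      unfolding increment_energy_def directional_energy_def
      by (rule nn_integral_le_plus_indicator[OF _ _ _ le2]) (auto simp: B_def c)
    ultimately show ?thesis using c(2) by (meson add_left_mono order_trans)
  qed
  with \<eta>(1) show ?thesis using that by blast
qed

lemma nn_integral_lborel_translate:
  fixes c :: "'a::euclidean_space"
  assumes [measurable]: "f \<in> borel_measurable borel"
  shows "(\<integral>\<^sup>+x. f (x + c) \<partial>lborel) = (\<integral>\<^sup>+x. f x \<partial>lborel)"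
proof -
  have "(\<integral>\<^sup>+x. f x \<partial>lborel) = (\<integral>\<^sup>+x. f x \<partial>distr lborel borel ((+) c))"
    by (simp add: lborel_distr_plus)
  also have "\<dots> = (\<integral>\<^sup>+x. f (c + x) \<partial>lborel)"
    by (subst nn_integral_distr) auto
  finally show ?thesis by (simp add: add.commute)
qed

lemma increment_energy_le_half:
  fixes w :: "'a::euclidean_space \<Rightarrow> real"
  assumes [measurable]: "w \<in> borel_measurable borel"
  shows "increment_energy w z \<le> 4 * increment_energy w ((1/2) *\<^sub>R z)"
proof -
  define h where "h = (1/2) *\<^sub>R z"
  have "(w (x + z) - w x)\<^sup>2 \<le> 2 * (w ((x + h) + h) - w (x + h))\<^sup>2 + 2 * (w (x + h) - w x)\<^sup>2" for x
  proof -
    have "w (x + z) - w x = (w ((x + h) + h) - w (x + h)) + (w (x + h) - w x)"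
      by (simp add: h_def add.assoc flip: scaleR_2)
    moreover have "(p + q)\<^sup>2 \<le> 2 * p\<^sup>2 + 2 * q\<^sup>2" for p q :: real
      using sum_squares_bound[of p q] by (simp add: power2_eq_square algebra_simps)
    ultimately show ?thesis by metis
  qed
  then have "ennreal ((w (x + z) - w x)\<^sup>2) \<le>
      ennreal 2 * ennreal ((w ((x + h) + h) - w (x + h))\<^sup>2) + ennreal 2 * ennreal ((w (x + h) - w x)\<^sup>2)" for x
    by (metis ennreal_leI ennreal_mult'' ennreal_plus mult_nonneg_nonneg zero_le_numeral zero_le_power2)
  then have "increment_energy w z \<le> (\<integral>\<^sup>+x. ennreal 2 * ennreal ((w ((x + h) + h) - w (x + h))\<^sup>2) +
      ennreal 2 * ennreal ((w (x + h) - w x)\<^sup>2) \<partial>lborel)"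
    unfolding increment_energy_def by (rule nn_integral_mono)
  also have "\<dots> = 2 * (\<integral>\<^sup>+x. ennreal ((w ((x + h) + h) - w (x + h))\<^sup>2) \<partial>lborel) + 2 * increment_energy w h"
    unfolding increment_energy_def by (subst nn_integral_add) (auto simp: nn_integral_cmult)
  also have "(\<integral>\<^sup>+x. ennreal ((w ((x + h) + h) - w (x + h))\<^sup>2) \<partial>lborel) = increment_energy w h"
    unfolding increment_energy_def
    by (rule nn_integral_lborel_translate[where f="\<lambda>x. ennreal ((w (x + h) - w x)\<^sup>2)"]) measurable
  finally show ?thesis by (simp add: h_def flip: mult_2 mult.assoc)
qed

lemma increment_energy_le_dyadic:
  fixes w :: "'a::euclidean_space \<Rightarrow> real"
  assumes [measurable]: "w \<in> borel_measurable borel"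
  shows "increment_energy w z \<le> ennreal (4 ^ n) * increment_energy w ((1/2) ^ n *\<^sub>R z)"
proof (induction n)
  case (Suc n)
  note Suc.IH
  also have "ennreal (4 ^ n) * increment_energy w ((1/2) ^ n *\<^sub>R z) \<le>
      ennreal (4 ^ n) * (4 * increment_energy w ((1/2) *\<^sub>R ((1/2) ^ n *\<^sub>R z)))"
    by (intro mult_left_mono increment_energy_le_half) auto
  also have "\<dots> = ennreal (4 ^ Suc n) * increment_energy w ((1/2) ^ Suc n *\<^sub>R z)"
    by (simp add: ennreal_mult mult_ac)
  finally show ?case .
qed simp

lemma directional_energy_scaleR:
  assumes [measurable]: "a \<in> borel_measurable borel"
  shows "directional_energy a (c *\<^sub>R z) = ennreal (c\<^sup>2) * directional_energy a z"
  unfolding directional_energy_def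
  by (subst nn_integral_cmult[symmetric]) (auto simp: ennreal_mult[symmetric] power_mult_distrib)

lemma increment_energy_le_directional_energy:
  assumes C1: "C1_compact_support w a"
  shows "increment_energy w z \<le> directional_energy a z"
proof (rule ennreal_le_epsilon)
  fix e :: real assume "0 < e"
  have [measurable]: "w \<in> borel_measurable borel" "a \<in> borel_measurable borel"
    using C1_compact_support_measurable[OF C1] by auto
  define e' where "e' = e / ((norm z)\<^sup>2 + 1)"
  have "e' > 0" "e' * (norm z)\<^sup>2 \<le> e"
    using \<open>0 < e\<close> by (auto simp: e'_def field_simps add_pos_nonneg)
  obtain \<eta> where \<eta>: "\<eta> > 0" "\<And>z. norm z < \<eta> \<Longrightarrow>
      increment_energy w z \<le> directional_energy a z + ennreal (e' * (norm z)\<^sup>2) \<and>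
      directional_energy a z \<le> increment_energy w z + ennreal (e' * (norm z)\<^sup>2)"
    using increment_energy_asymptotic[OF C1 \<open>e' > 0\<close>] by metis
  obtain n where n: "(1/2::real) ^ n < \<eta> / (norm z + 1)"
    using real_arch_pow_inv[of "\<eta> / (norm z + 1)" "1/2"] \<eta>(1) by (auto simp: add_nonneg_pos)
  have "(1/2::real) ^ n * norm z \<le> (1/2) ^ n * (norm z + 1)" by simp
  also have "\<dots> < \<eta>" using n by (simp add: add_nonneg_pos less_divide_eq)
  finally have small: "norm ((1/2::real) ^ n *\<^sub>R z) < \<eta>" by simp
  define c :: real where "c = (1/2) ^ n"
  have four: "4 ^ n * c\<^sup>2 = 1"
    by (simp add: c_def power2_eq_square flip: power_mult_distrib)
  have "increment_energy w z \<le> ennreal (4 ^ n) * increment_energy w (c *\<^sub>R z)"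
    unfolding c_def by (rule increment_energy_le_dyadic) measurable
  also have "\<dots> \<le> ennreal (4 ^ n) * (directional_energy a (c *\<^sub>R z) + ennreal (e' * (norm (c *\<^sub>R z))\<^sup>2))"
    using \<eta>(2)[of "c *\<^sub>R z"] small by (intro mult_left_mono) (auto simp: c_def)
  also have "\<dots> = ennreal (4 ^ n * c\<^sup>2) * directional_energy a z + ennreal (4 ^ n * c\<^sup>2 * (e' * (norm z)\<^sup>2))"
    using \<open>e' > 0\<close> by (simp add: directional_energy_scaleR distrib_left ennreal_mult power_mult_distrib mult_ac)
  also have "\<dots> = directional_energy a z + ennreal (e' * (norm z)\<^sup>2)"
    unfolding four by simp
  also have "\<dots> \<le> directional_energy a z + ennreal e"
    using \<open>e' * (norm z)\<^sup>2 \<le> e\<close> by (intro add_left_mono ennreal_leI)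
  finally show "increment_energy w z \<le> directional_energy a z + ennreal e" .
qed

definition reflect_coord :: "'a::euclidean_space \<Rightarrow> 'a \<Rightarrow> 'a" where
  "reflect_coord i x = (\<Sum>j\<in>Basis. ((if j = i then -1 else 1) * (x \<bullet> j)) *\<^sub>R j)"

lemma reflect_coord_inner:
  assumes "k \<in> Basis"
  shows "reflect_coord i x \<bullet> k = (if k = i then - (x \<bullet> k) else x \<bullet> k)"
proof -
  have "reflect_coord i x \<bullet> k = (\<Sum>j\<in>Basis. if j = k then (if j = i then -1 else 1) * (x \<bullet> j) else 0)"
    unfolding reflect_coord_def inner_sum_left using assms by (intro sum.cong) (auto simp: inner_Basis)
  then show ?thesis using assms by simp
qed

lemma norm_reflect_coord: "norm (reflect_coord i x) = norm x"
proof -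
  have "(norm (reflect_coord i x))\<^sup>2 = (norm x)\<^sup>2"
    unfolding power2_norm_eq_inner
    by (subst (1 2) euclidean_inner) (auto simp: reflect_coord_inner intro!: sum.cong)
  then show ?thesis by (simp add: power2_eq_iff_nonneg)
qed

lemma reflect_coord_measurable [measurable]: "reflect_coord i \<in> borel_measurable borel"
  unfolding reflect_coord_def by measurable

lemma lborel_distr_reflect_coord:
  "distr lborel borel (reflect_coord i) = (lborel :: 'a::euclidean_space measure)"
proof -
  have "(lborel :: 'a measure) = density (distr lborel borel (\<lambda>x. 0 + (\<Sum>j\<in>Basis. ((if j = i then -1 else 1) * (x \<bullet> j)) *\<^sub>R j)))
     (\<lambda>_. (\<Prod>j\<in>Basis. \<bar>(if j = i then -1 else 1 :: real)\<bar>))"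
    by (rule lborel_affine_euclidean) auto
  also have "(\<lambda>_::'a. (\<Prod>j\<in>Basis. \<bar>(if j = i then -1 else 1 :: real)\<bar>)) = (\<lambda>_. 1)"
    by (auto intro!: prod.neutral)
  finally show ?thesis by (simp add: density_1 reflect_coord_def[abs_def])
qed

lemma integral_radial_mixed_moment:
  fixes h :: "real \<Rightarrow> real"
  assumes [measurable]: "h \<in> borel_measurable borel" and "i \<in> Basis" "j \<in> Basis" "i \<noteq> j"
  shows "(\<integral>z. h (norm z) * ((z \<bullet> i) * (z \<bullet> j)) \<partial>(lborel :: 'a::euclidean_space measure)) = 0"
proof -
  let ?f = "\<lambda>z::'a. h (norm z) * ((z \<bullet> i) * (z \<bullet> j))"
  have "(\<integral>z. ?f z \<partial>lborel) = (\<integral>z. ?f z \<partial>distr lborel borel (reflect_coord i))"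
    by (simp add: lborel_distr_reflect_coord)
  also have "\<dots> = (\<integral>z. ?f (reflect_coord i z) \<partial>lborel)"
    by (rule integral_distr) auto
  also have "\<dots> = - (\<integral>z. ?f z \<partial>lborel)"
    using assms(2-4) by (simp add: reflect_coord_inner norm_reflect_coord)
  finally show ?thesis by simp
qed

definition radial_moment :: "(real \<Rightarrow> real) \<Rightarrow> 'a::euclidean_space \<Rightarrow> ennreal" where
  "radial_moment h i = (\<integral>\<^sup>+z. ennreal (h (norm z) * (z \<bullet> i)\<^sup>2) \<partial>lborel)"

lemma abs_mult_le_sum_squares: "\<bar>p * q\<bar> \<le> p\<^sup>2 + (q::real)\<^sup>2"
proof -
  have "2 * \<bar>p * q\<bar> \<le> p\<^sup>2 + q\<^sup>2"
    using sum_squares_bound[of "\<bar>p\<bar>" "\<bar>q\<bar>"] by (simp add: abs_mult power2_eq_square)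
  then show ?thesis by (smt (verit) zero_le_power2)
qed

lemma integrable_radial_mixed_moment:
  fixes h :: "real \<Rightarrow> real"
  assumes [measurable]: "h \<in> borel_measurable borel" and h0: "\<And>t. h t \<ge> 0"
    and fin: "\<And>i::'a::euclidean_space. i \<in> Basis \<Longrightarrow> radial_moment h i < \<infinity>"
    and "i \<in> Basis" "j \<in> Basis"
  shows "integrable lborel (\<lambda>z::'a. h (norm z) * ((z \<bullet> i) * (z \<bullet> j)))"
proof -
  have int: "integrable lborel (\<lambda>z::'a. h (norm z) * (z \<bullet> k)\<^sup>2)" if "k \<in> Basis" for k
    using fin[OF that] h0 by (intro integrableI_nonneg) (auto simp: radial_moment_def)
  show ?thesis
  proof (rule Bochner_Integration.integrable_bound[OF Bochner_Integration.integrable_add[OF int int]])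
    show "AE z in lborel. norm (h (norm z) * ((z \<bullet> i) * (z \<bullet> j))) \<le> norm (h (norm z) * (z \<bullet> i)\<^sup>2 + h (norm z) * (z \<bullet> j)\<^sup>2)"
      using h0 abs_mult_le_sum_squares by (auto simp: abs_mult distrib_left[symmetric] intro!: mult_left_mono)
  qed (use assms in auto)
qed

lemma nn_integral_radial_quadratic_form:
  fixes h :: "real \<Rightarrow> real" and b :: "'a::euclidean_space"
  assumes [measurable]: "h \<in> borel_measurable borel" and h0: "\<And>t. h t \<ge> 0"
    and fin: "\<And>i::'a. i \<in> Basis \<Longrightarrow> radial_moment h i < \<infinity>"
  shows "(\<integral>\<^sup>+z. ennreal (h (norm z) * (b \<bullet> z)\<^sup>2) \<partial>lborel) = (\<Sum>i\<in>Basis. ennreal ((b \<bullet> i)\<^sup>2) * radial_moment h i)"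
proof -
  define f where "f i j z = h (norm z) * ((z \<bullet> i) * (z \<bullet> j))" for i j z :: 'a
  have int_f: "integrable lborel (f i j)" if "i \<in> Basis" "j \<in> Basis" for i j
    unfolding f_def[abs_def] using integrable_radial_mixed_moment[OF _ h0 fin that] by simp
  have fii: "f i i = (\<lambda>z. h (norm z) * (z \<bullet> i)\<^sup>2)" for i by (auto simp: f_def power2_eq_square)
  have integral_fii: "(\<integral>z. f i i z \<partial>lborel) \<ge> 0" "radial_moment h i = ennreal (\<integral>z. f i i z \<partial>lborel)"
    if "i \<in> Basis" for i
    using int_f[OF that that] h0 unfolding fii radial_moment_def by (auto intro: nn_integral_eq_integral)
  have expand: "h (norm z) * (b \<bullet> z)\<^sup>2 = (\<Sum>i\<in>Basis. \<Sum>j\<in>Basis. ((b \<bullet> i) * (b \<bullet> j)) * f i j z)" for z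
    unfolding f_def euclidean_inner[of b z] power2_eq_square sum_product
    by (simp add: sum_distrib_left mult_ac)
  have "(\<integral>z. h (norm z) * (b \<bullet> z)\<^sup>2 \<partial>lborel) =
      (\<Sum>i\<in>Basis. \<Sum>j\<in>Basis. ((b \<bullet> i) * (b \<bullet> j)) * (\<integral>z. f i j z \<partial>lborel))"
    unfolding expand using int_f by (simp add: Bochner_Integration.integral_sum Bochner_Integration.integrable_sum)
  also have "\<dots> = (\<Sum>i\<in>Basis. (b \<bullet> i)\<^sup>2 * (\<integral>z. f i i z \<partial>lborel))"
  proof (intro sum.cong refl)
    fix i :: 'a assume i: "i \<in> Basis"
    have "(\<Sum>j\<in>Basis. ((b \<bullet> i) * (b \<bullet> j)) * (\<integral>z. f i j z \<partial>lborel)) =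
        (\<Sum>j\<in>Basis. if j = i then (b \<bullet> i)\<^sup>2 * (\<integral>z. f i i z \<partial>lborel) else 0)"
      using integral_radial_mixed_moment[of h i] i by (intro sum.cong) (auto simp: f_def power2_eq_square)
    then show "(\<Sum>j\<in>Basis. ((b \<bullet> i) * (b \<bullet> j)) * (\<integral>z. f i j z \<partial>lborel)) = (b \<bullet> i)\<^sup>2 * (\<integral>z. f i i z \<partial>lborel)"
      using i by simp
  qed
  finally have L: "(\<integral>z. h (norm z) * (b \<bullet> z)\<^sup>2 \<partial>lborel) = (\<Sum>i\<in>Basis. (b \<bullet> i)\<^sup>2 * (\<integral>z. f i i z \<partial>lborel))" .
  have "integrable lborel (\<lambda>z. h (norm z) * (b \<bullet> z)\<^sup>2)"
    unfolding expand using int_f by (intro Bochner_Integration.integrable_sum Bochner_Integration.integrable_mult_right) auto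
  then have "(\<integral>\<^sup>+z. ennreal (h (norm z) * (b \<bullet> z)\<^sup>2) \<partial>lborel) = ennreal (\<integral>z. h (norm z) * (b \<bullet> z)\<^sup>2 \<partial>lborel)"
    using h0 by (intro nn_integral_eq_integral) auto
  also have "\<dots> = (\<Sum>i\<in>Basis. ennreal ((b \<bullet> i)\<^sup>2) * radial_moment h i)"
    unfolding L using integral_fii by (auto simp: sum_ennreal[symmetric] ennreal_mult intro!: sum.cong)
  finally show ?thesis .
qed

definition nonlocal_energy :: "(real \<Rightarrow> real) \<Rightarrow> ('a::euclidean_space \<Rightarrow> real) \<Rightarrow> ennreal" where
  "nonlocal_energy h w = (\<integral>\<^sup>+x. \<integral>\<^sup>+y. ennreal ((w y - w x)\<^sup>2 * h (norm (y - x))) \<partial>lborel \<partial>lborel)"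

definition L2_norm_sq :: "('a::euclidean_space \<Rightarrow> 'b::real_normed_vector) \<Rightarrow> ennreal" where
  "L2_norm_sq a = (\<integral>\<^sup>+x. ennreal ((norm (a x))\<^sup>2) \<partial>lborel)"

lemma increment_energy_measurable [measurable]:
  assumes [measurable]: "w \<in> borel_measurable borel"
  shows "increment_energy w \<in> borel_measurable borel"
  unfolding increment_energy_def[abs_def] by (rule lborel.borel_measurable_nn_integral) measurable

lemma directional_energy_measurable [measurable]:
  assumes [measurable]: "a \<in> borel_measurable borel"
  shows "directional_energy a \<in> borel_measurable borel"
  unfolding directional_energy_def[abs_def] by (rule lborel.borel_measurable_nn_integral) measurable

lemma nonlocal_energy_eq_increment_energy:
  fixes w :: "'a::euclidean_space \<Rightarrow> real"
  assumes [measurable]: "h \<in> borel_measurable borel" "w \<in> borel_measurable borel" and h0: "\<And>t. h t \<ge> 0"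
  shows "nonlocal_energy h w = (\<integral>\<^sup>+z. ennreal (h (norm z)) * increment_energy w z \<partial>lborel)"
proof -
  have "(\<integral>\<^sup>+y. ennreal ((w y - w x)\<^sup>2 * h (norm (y - x))) \<partial>lborel) =
      (\<integral>\<^sup>+z. ennreal ((w (x + z) - w x)\<^sup>2 * h (norm z)) \<partial>lborel)" for x
    using nn_integral_lborel_translate[where f="\<lambda>y. ennreal ((w y - w x)\<^sup>2 * h (norm (y - x)))" and c=x]
    by (simp add: add.commute)
  then have "nonlocal_energy h w = (\<integral>\<^sup>+x. \<integral>\<^sup>+z. ennreal ((w (x + z) - w x)\<^sup>2 * h (norm z)) \<partial>lborel \<partial>lborel)"
    unfolding nonlocal_energy_def by simp
  also have "\<dots> = (\<integral>\<^sup>+z. \<integral>\<^sup>+x. ennreal ((w (x + z) - w x)\<^sup>2 * h (norm z)) \<partial>lborel \<partial>lborel)"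
    by (rule lborel_pair.Fubini'[symmetric]) measurable
  also have "\<dots> = (\<integral>\<^sup>+z. ennreal (h (norm z)) * increment_energy w z \<partial>lborel)"
    unfolding increment_energy_def
    by (intro nn_integral_cong, subst nn_integral_cmult[symmetric]) (auto simp: ennreal_mult[symmetric] h0 mult_ac)
  finally show ?thesis .
qed

lemma L2_norm_sq_eq_sum_components:
  fixes a :: "'a::euclidean_space \<Rightarrow> 'b::euclidean_space"
  assumes [measurable]: "a \<in> borel_measurable borel"
  shows "L2_norm_sq a = (\<Sum>i\<in>Basis. \<integral>\<^sup>+x. ennreal ((a x \<bullet> i)\<^sup>2) \<partial>lborel)"
proof -
  have "(norm y)\<^sup>2 = (\<Sum>i\<in>Basis. (y \<bullet> i)\<^sup>2)" for y :: 'b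
    unfolding power2_norm_eq_inner by (subst euclidean_inner) (simp add: power2_eq_square)
  then show ?thesis unfolding L2_norm_sq_def by (subst nn_integral_sum[symmetric]) auto
qed

lemma nn_integral_radial_directional_energy:
  fixes h :: "real \<Rightarrow> real" and a :: "'a::euclidean_space \<Rightarrow> 'a"
  assumes [measurable]: "h \<in> borel_measurable borel" "a \<in> borel_measurable borel" and h0: "\<And>t. h t \<ge> 0"
    and fin: "\<And>i::'a. i \<in> Basis \<Longrightarrow> radial_moment h i < \<infinity>"
  shows "(\<integral>\<^sup>+z. ennreal (h (norm z)) * directional_energy a z \<partial>lborel) =
     (\<Sum>i\<in>Basis. radial_moment h i * (\<integral>\<^sup>+x. ennreal ((a x \<bullet> i)\<^sup>2) \<partial>lborel))"
proof -
  have "(\<integral>\<^sup>+z. ennreal (h (norm z)) * directional_energy a z \<partial>lborel) =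
      (\<integral>\<^sup>+z. \<integral>\<^sup>+x. ennreal (h (norm z) * (a x \<bullet> z)\<^sup>2) \<partial>lborel \<partial>lborel)"
    unfolding directional_energy_def
    by (intro nn_integral_cong, subst nn_integral_cmult[symmetric]) (auto simp: ennreal_mult[symmetric] h0)
  also have "\<dots> = (\<integral>\<^sup>+x. \<integral>\<^sup>+z. ennreal (h (norm z) * (a x \<bullet> z)\<^sup>2) \<partial>lborel \<partial>lborel)"
    by (rule lborel_pair.Fubini') measurable
  also have "\<dots> = (\<integral>\<^sup>+x. (\<Sum>i\<in>Basis. ennreal ((a x \<bullet> i)\<^sup>2) * radial_moment h i) \<partial>lborel)"
    by (intro nn_integral_cong nn_integral_radial_quadratic_form h0 fin) auto
  also have "\<dots> = (\<Sum>i\<in>Basis. radial_moment h i * (\<integral>\<^sup>+x. ennreal ((a x \<bullet> i)\<^sup>2) \<partial>lborel))"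
    by (subst nn_integral_sum) (auto simp: nn_integral_cmult mult.commute[of "ennreal _"])
  finally show ?thesis .
qed

lemma nonlocal_energy_le_L2_norm_sq:
  fixes h :: "real \<Rightarrow> real" and a :: "'a::euclidean_space \<Rightarrow> 'a"
  assumes [measurable]: "h \<in> borel_measurable borel" and h0: "\<And>t. h t \<ge> 0"
    and m1: "\<And>i::'a. i \<in> Basis \<Longrightarrow> radial_moment h i \<le> 1"
    and C1: "C1_compact_support w a"
  shows "nonlocal_energy h w \<le> L2_norm_sq a"
proof -
  have [measurable]: "w \<in> borel_measurable borel" "a \<in> borel_measurable borel"
    using C1_compact_support_measurable[OF C1] by auto
  have fin: "radial_moment h i < \<infinity>" if "i \<in> Basis" for i :: 'a
    using m1[OF that] by (simp add: le_less_trans)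
  have "nonlocal_energy h w = (\<integral>\<^sup>+z. ennreal (h (norm z)) * increment_energy w z \<partial>lborel)"
    by (rule nonlocal_energy_eq_increment_energy) (auto simp: h0)
  also have "\<dots> \<le> (\<integral>\<^sup>+z. ennreal (h (norm z)) * directional_energy a z \<partial>lborel)"
    by (intro nn_integral_mono mult_left_mono increment_energy_le_directional_energy[OF C1]) auto
  also have "\<dots> = (\<Sum>i\<in>Basis. radial_moment h i * (\<integral>\<^sup>+x. ennreal ((a x \<bullet> i)\<^sup>2) \<partial>lborel))"
    by (rule nn_integral_radial_directional_energy[OF _ _ h0 fin]) auto
  also have "\<dots> \<le> (\<Sum>i\<in>Basis. 1 * (\<integral>\<^sup>+x. ennreal ((a x \<bullet> i)\<^sup>2) \<partial>lborel))"
    by (intro sum_mono mult_right_mono m1) auto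
  also have "\<dots> = L2_norm_sq a"
    by (simp add: L2_norm_sq_eq_sum_components)
  finally show ?thesis .
qed

lemma C1_compact_support_L2_finite:
  fixes a :: "'a::euclidean_space \<Rightarrow> 'a"
  assumes "C1_compact_support w a"
  shows "L2_norm_sq a < \<infinity>"
proof -
  obtain R M where RM: "R \<ge> 0" "M \<ge> 0" "\<And>x. R < norm x \<Longrightarrow> w x = 0 \<and> a x = 0" "\<And>x. norm (a x) \<le> M"
    using C1_compact_support_bounded[OF assms] by blast
  have "ennreal ((norm (a x))\<^sup>2) \<le> ennreal (M\<^sup>2) * indicator (cball 0 R) x" for x
  proof (cases "norm x \<le> R")
    case True
    then show ?thesis using RM(2) RM(4)[of x] by (simp add: ennreal_leI power_mono)
  next
    case False
    then show ?thesis using RM(3)[of x] by simp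
  qed
  then have "L2_norm_sq a \<le> (\<integral>\<^sup>+x. ennreal (M\<^sup>2) * indicator (cball (0::'a) R) x \<partial>lborel)"
    unfolding L2_norm_sq_def by (rule nn_integral_mono)
  also have "\<dots> < \<infinity>"
    using emeasure_lborel_cball_finite[of "0::'a" R] by (simp add: nn_integral_cmult_indicator ennreal_mult_less_top)
  finally show ?thesis .
qed

lemma nn_integral_radial_norm_sq:
  fixes h :: "real \<Rightarrow> real"
  assumes [measurable]: "h \<in> borel_measurable borel" and h0: "\<And>t. h t \<ge> 0"
  shows "(\<integral>\<^sup>+(z::'a::euclidean_space). ennreal (h (norm z) * (norm z)\<^sup>2) \<partial>lborel) = (\<Sum>i\<in>Basis. radial_moment h (i::'a))"
proof -
  have "ennreal (h (norm z) * (norm z)\<^sup>2) = (\<Sum>i\<in>Basis. ennreal (h (norm z) * (z \<bullet> i)\<^sup>2))" for z :: 'a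
  proof -
    have "(norm z)\<^sup>2 = (\<Sum>i\<in>Basis. (z \<bullet> i)\<^sup>2)"
      unfolding power2_norm_eq_inner by (subst euclidean_inner) (simp add: power2_eq_square)
    then show ?thesis using h0 by (simp add: sum_distrib_left sum_ennreal)
  qed
  then show ?thesis unfolding radial_moment_def by (subst nn_integral_sum[symmetric]) auto
qed

lemma nn_integral_radial_perturbation:
  fixes h :: "real \<Rightarrow> real" and F G :: "'a::euclidean_space \<Rightarrow> ennreal"
  assumes [measurable]: "h \<in> borel_measurable borel" "F \<in> borel_measurable borel" "G \<in> borel_measurable borel"
    and h0: "\<And>t. h t \<ge> 0" and m1: "\<And>i::'a. i \<in> Basis \<Longrightarrow> radial_moment h i \<le> 1" and "e \<ge> 0"
    and close: "\<And>z. h (norm z) \<noteq> 0 \<Longrightarrow> F z \<le> G z + ennreal (e * (norm z)\<^sup>2)"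
  shows "(\<integral>\<^sup>+z. ennreal (h (norm z)) * F z \<partial>lborel) \<le>
    (\<integral>\<^sup>+z. ennreal (h (norm z)) * G z \<partial>lborel) + ennreal (e * DIM('a))"
proof -
  have "ennreal (h (norm z)) * F z \<le> ennreal (h (norm z)) * G z + ennreal e * ennreal (h (norm z) * (norm z)\<^sup>2)" for z
  proof (cases "h (norm z) = 0")
    case False
    then have "ennreal (h (norm z)) * F z \<le> ennreal (h (norm z)) * (G z + ennreal (e * (norm z)\<^sup>2))"
      by (intro mult_left_mono close) auto
    then show ?thesis using h0 \<open>e \<ge> 0\<close> by (simp add: distrib_left ennreal_mult'[symmetric] mult_ac)
  qed simp
  then have "(\<integral>\<^sup>+z. ennreal (h (norm z)) * F z \<partial>lborel) \<le>
      (\<integral>\<^sup>+z. ennreal (h (norm z)) * G z + ennreal e * ennreal (h (norm z) * (norm z)\<^sup>2) \<partial>lborel)"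
    by (rule nn_integral_mono)
  also have "\<dots> = (\<integral>\<^sup>+z. ennreal (h (norm z)) * G z \<partial>lborel) +
      ennreal e * (\<integral>\<^sup>+(z::'a). ennreal (h (norm z) * (norm z)\<^sup>2) \<partial>lborel)"
    by (simp add: nn_integral_add nn_integral_cmult)
  also have "\<dots> \<le> (\<integral>\<^sup>+z. ennreal (h (norm z)) * G z \<partial>lborel) + ennreal e * (\<Sum>i\<in>(Basis::'a set). 1)"
    unfolding nn_integral_radial_norm_sq[OF assms(1) h0] by (intro add_left_mono mult_left_mono sum_mono m1) auto
  finally show ?thesis
    using \<open>e \<ge> 0\<close> by (simp add: ennreal_mult' ennreal_of_nat_eq_real_of_nat)
qed

lemma tendsto_ennreal_of_approx:
  fixes X A :: "nat \<Rightarrow> ennreal"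
  assumes A: "A \<longlonglongrightarrow> ennreal L" and L: "L \<ge> 0"
    and approx: "\<And>e. e > 0 \<Longrightarrow> eventually (\<lambda>k. X k \<le> A k + ennreal e \<and> A k \<le> X k + ennreal e) sequentially"
  shows "X \<longlonglongrightarrow> ennreal L"
proof -
  have "eventually (\<lambda>k. A k < ennreal (L + 1)) sequentially"
    using order_tendstoD(2)[OF A] L by (simp add: ennreal_lessI)
  then have fin: "eventually (\<lambda>k. A k < top \<and> X k < top) sequentially"
    using approx[OF zero_less_one]
    by eventually_elim (metis ennreal_add_less_top ennreal_less_top order_le_less_trans order_less_trans)
  define x where "x k = enn2real (X k)" for k
  define \<alpha> where "\<alpha> k = enn2real (A k)" for k
  have \<alpha>: "\<alpha> \<longlonglongrightarrow> L" unfolding \<alpha>_def by (rule tendsto_enn2real[OF A L])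
  have "x \<longlonglongrightarrow> L"
  proof (rule tendstoI)
    fix e :: real assume e: "e > 0"
    have "eventually (\<lambda>k. dist (\<alpha> k) L < e/2) sequentially" using tendstoD[OF \<alpha>, of "e/2"] e by simp
    moreover have "eventually (\<lambda>k. X k \<le> A k + ennreal (e/4) \<and> A k \<le> X k + ennreal (e/4)) sequentially"
      using approx e by simp
    ultimately show "eventually (\<lambda>k. dist (x k) L < e) sequentially"
      using fin
    proof eventually_elim
      case (elim k)
      have XA: "X k = ennreal (x k)" "A k = ennreal (\<alpha> k)" "x k \<ge> 0" "\<alpha> k \<ge> 0"
        using elim(3) unfolding x_def \<alpha>_def by auto
      have "ennreal (x k) \<le> ennreal (\<alpha> k + e/4)" "ennreal (\<alpha> k) \<le> ennreal (x k + e/4)"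
        using elim(2) XA e by (subst ennreal_plus; force)+
      then have "x k \<le> \<alpha> k + e/4" "\<alpha> k \<le> x k + e/4"
        using XA e by (subst (asm) ennreal_le_iff; force)+
      then show ?case using elim(1) by (auto simp: dist_real_def abs_if split: if_splits)
    qed
  qed
  then have "(\<lambda>k. ennreal (x k)) \<longlonglongrightarrow> ennreal L" by (rule tendsto_ennrealI)
  moreover have "eventually (\<lambda>k. ennreal (x k) = X k) sequentially"
    using fin by eventually_elim (auto simp: x_def)
  ultimately show ?thesis by (rule Lim_transform_eventually)
qed

lemma nn_integral_radial_directional_energy_tendsto:
  fixes h :: "nat \<Rightarrow> real \<Rightarrow> real" and a :: "'a::euclidean_space \<Rightarrow> 'a"
  assumes [measurable]: "\<And>k. h k \<in> borel_measurable borel" "a \<in> borel_measurable borel"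
    and h0: "\<And>k t. h k t \<ge> 0"
    and m1: "\<And>k i::'a. i \<in> Basis \<Longrightarrow> radial_moment (h k) i \<le> 1"
    and m_lim: "\<And>i::'a. i \<in> Basis \<Longrightarrow> (\<lambda>k. radial_moment (h k) i) \<longlonglongrightarrow> 1"
    and fin: "L2_norm_sq a < \<infinity>"
  shows "(\<lambda>k. \<integral>\<^sup>+z. ennreal (h k (norm z)) * directional_energy a z \<partial>lborel) \<longlonglongrightarrow> L2_norm_sq a"
proof -
  define c where "c i = (\<integral>\<^sup>+x. ennreal ((a x \<bullet> i)\<^sup>2) \<partial>lborel)" for i
  have L2: "L2_norm_sq a = (\<Sum>i\<in>Basis. c i)"
    unfolding c_def by (rule L2_norm_sq_eq_sum_components) simp
  have "radial_moment (h k) i < \<infinity>" if "i \<in> Basis" for k and i :: 'a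
    using m1[OF that] by (rule le_less_trans) simp
  then have "(\<lambda>k. \<integral>\<^sup>+z. ennreal (h k (norm z)) * directional_energy a z \<partial>lborel) =
      (\<lambda>k. \<Sum>i\<in>Basis. c i * radial_moment (h k) i)"
    unfolding c_def by (subst nn_integral_radial_directional_energy) (auto simp: h0 mult.commute)
  moreover have "(\<lambda>k. \<Sum>i\<in>Basis. c i * radial_moment (h k) i) \<longlonglongrightarrow> (\<Sum>i\<in>Basis. c i * 1)"
    by (intro tendsto_sum ennreal_tendsto_cmult m_lim) (use fin in \<open>auto simp: L2\<close>)
  ultimately show ?thesis by (simp add: L2)
qed

lemma nonlocal_energy_tendsto_L2_norm_sq:
  fixes h :: "nat \<Rightarrow> real \<Rightarrow> real" and a :: "'a::euclidean_space \<Rightarrow> 'a" and \<delta> :: "nat \<Rightarrow> real"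
  assumes [measurable]: "\<And>k. h k \<in> borel_measurable borel" and h0: "\<And>k t. h k t \<ge> 0"
    and m1: "\<And>k i::'a. i \<in> Basis \<Longrightarrow> radial_moment (h k) i \<le> 1"
    and m_lim: "\<And>i::'a. i \<in> Basis \<Longrightarrow> (\<lambda>k. radial_moment (h k) i) \<longlonglongrightarrow> 1"
    and supp: "\<And>k t. t > \<delta> k \<Longrightarrow> h k t = 0" and \<delta>: "\<delta> \<longlonglongrightarrow> 0"
    and C1: "C1_compact_support w a"
  shows "(\<lambda>k. nonlocal_energy (h k) w) \<longlonglongrightarrow> L2_norm_sq a"
proof -
  have [measurable]: "w \<in> borel_measurable borel" "a \<in> borel_measurable borel"
    using C1_compact_support_measurable[OF C1] by auto
  have L2_fin: "L2_norm_sq a < \<infinity>" by (rule C1_compact_support_L2_finite[OF C1])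
  define A where "A k = (\<integral>\<^sup>+z. ennreal (h k (norm z)) * directional_energy a z \<partial>lborel)" for k
  have A: "A \<longlonglongrightarrow> ennreal (enn2real (L2_norm_sq a))"
    using nn_integral_radial_directional_energy_tendsto[OF _ _ h0 m1 m_lim L2_fin] L2_fin
    unfolding A_def[abs_def] by (simp add: less_top[symmetric])
  have "eventually (\<lambda>k. nonlocal_energy (h k) w \<le> A k + ennreal e \<and> A k \<le> nonlocal_energy (h k) w + ennreal e) sequentially"
    if "e > 0" for e
  proof -
    define e' where "e' = e / DIM('a)"
    have e': "e' > 0" "e' * DIM('a) = e" using \<open>e > 0\<close> by (auto simp: e'_def)
    obtain \<eta> where \<eta>: "\<eta> > 0" "\<And>z. norm z < \<eta> \<Longrightarrow>
        increment_energy w z \<le> directional_energy a z + ennreal (e' * (norm z)\<^sup>2) \<and>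
        directional_energy a z \<le> increment_energy w z + ennreal (e' * (norm z)\<^sup>2)"
      using increment_energy_asymptotic[OF C1 \<open>e' > 0\<close>] by metis
    show ?thesis using order_tendstoD(2)[OF \<delta> \<eta>(1)]
    proof eventually_elim
      case (elim k)
      have close: "norm z < \<eta>" if "h k (norm z) \<noteq> 0" for z :: 'a
        using supp[of k "norm z"] that elim by force
      have "nonlocal_energy (h k) w = (\<integral>\<^sup>+z. ennreal (h k (norm z)) * increment_energy w z \<partial>lborel)"
        by (rule nonlocal_energy_eq_increment_energy) (auto simp: h0)
      then show ?case unfolding A_def using \<eta>(2)[OF close] e' h0 m1
        by (auto intro!: nn_integral_radial_perturbation)
    qed
  qed
  from tendsto_ennreal_of_approx[OF A _ this] show ?thesis
    using L2_fin by (simp add: less_top)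
qed

lemma power2_add_le_eps:
  fixes p q \<epsilon> :: real
  assumes "\<epsilon> > 0"
  shows "(p + q)\<^sup>2 \<le> (1 + \<epsilon>) * p\<^sup>2 + (1 + 1/\<epsilon>) * q\<^sup>2"
proof -
  have "0 \<le> (\<epsilon> * p - q)\<^sup>2 / \<epsilon>" using assms by simp
  also have "(\<epsilon> * p - q)\<^sup>2 / \<epsilon> = \<epsilon> * p\<^sup>2 + (1/\<epsilon>) * q\<^sup>2 - 2 * p * q"
    using assms by (simp add: power2_eq_square field_simps)
  finally show ?thesis by (simp add: power2_eq_square algebra_simps)
qed

lemma nonlocal_energy_le_eps:
  fixes v w :: "'a::euclidean_space \<Rightarrow> real"
  assumes [measurable]: "h \<in> borel_measurable borel" "v \<in> borel_measurable borel" "w \<in> borel_measurable borel"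
    and h0: "\<And>t. h t \<ge> 0" and \<epsilon>: "\<epsilon> > 0"
  shows "nonlocal_energy h v \<le> ennreal (1 + \<epsilon>) * nonlocal_energy h w + ennreal (1 + 1/\<epsilon>) * nonlocal_energy h (\<lambda>x. v x - w x)"
proof -
  define F where "F f x y = ennreal ((f y - f x)\<^sup>2 * h (norm (y - x)))" for f :: "'a \<Rightarrow> real" and x y
  have [measurable]: "(\<lambda>x. \<integral>\<^sup>+y. F f x y \<partial>lborel) \<in> borel_measurable lborel" "F f x \<in> borel_measurable lborel"
    if [measurable]: "f \<in> borel_measurable borel" for f x
  proof -
    have "(\<lambda>(x, y). F f x y) \<in> borel_measurable (lborel \<Otimes>\<^sub>M lborel)" unfolding F_def by measurable
    then show "(\<lambda>x. \<integral>\<^sup>+y. F f x y \<partial>lborel) \<in> borel_measurable lborel"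
      by (intro lborel.borel_measurable_nn_integral) simp
    show "F f x \<in> borel_measurable lborel" unfolding F_def by measurable
  qed
  have E: "nonlocal_energy h f = (\<integral>\<^sup>+x. \<integral>\<^sup>+y. F f x y \<partial>lborel \<partial>lborel)" for f
    unfolding nonlocal_energy_def F_def ..
  have "F v x y \<le> ennreal (1 + \<epsilon>) * F w x y + ennreal (1 + 1/\<epsilon>) * F (\<lambda>x. v x - w x) x y" for x y
  proof -
    have "(v y - v x)\<^sup>2 \<le> (1 + \<epsilon>) * (w y - w x)\<^sup>2 + (1 + 1/\<epsilon>) * (v y - w y - (v x - w x))\<^sup>2"
      using power2_add_le_eps[OF \<epsilon>, of "w y - w x" "v y - w y - (v x - w x)"] by simp
    then have "F v x y \<le> ennreal (((1 + \<epsilon>) * (w y - w x)\<^sup>2 + (1 + 1/\<epsilon>) * (v y - w y - (v x - w x))\<^sup>2) * h (norm (y - x)))"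
      unfolding F_def using h0 by (intro ennreal_leI mult_right_mono)
    also have "\<dots> = ennreal (1 + \<epsilon>) * F w x y + ennreal (1 + 1/\<epsilon>) * F (\<lambda>x. v x - w x) x y"
      unfolding F_def using \<epsilon> h0 by (simp add: distrib_right ennreal_plus ennreal_mult[symmetric] mult.assoc)
    finally show ?thesis .
  qed
  then have "nonlocal_energy h v \<le> (\<integral>\<^sup>+x. \<integral>\<^sup>+y. ennreal (1 + \<epsilon>) * F w x y + ennreal (1 + 1/\<epsilon>) * F (\<lambda>x. v x - w x) x y \<partial>lborel \<partial>lborel)"
    unfolding E by (intro nn_integral_mono)
  also have "\<dots> = ennreal (1 + \<epsilon>) * nonlocal_energy h w + ennreal (1 + 1/\<epsilon>) * nonlocal_energy h (\<lambda>x. v x - w x)"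
    unfolding E by (simp add: nn_integral_add nn_integral_cmult)
  finally show ?thesis .
qed

lemma nonlocal_energy_diff_commute:
  "nonlocal_energy h (\<lambda>x. v x - w x) = nonlocal_energy h (\<lambda>x. w x - v x)"
proof -
  have "(v y - w y - (v x - w x))\<^sup>2 = (w y - v y - (w x - v x))\<^sup>2" for x y :: 'a
    by (simp add: power2_eq_square algebra_simps)
  then show ?thesis unfolding nonlocal_energy_def by simp
qed

lemma L2_norm_sq_le_eps:
  fixes a b :: "'a::euclidean_space \<Rightarrow> 'b::euclidean_space"
  assumes [measurable]: "a \<in> borel_measurable borel" "b \<in> borel_measurable borel" and \<epsilon>: "\<epsilon> > 0"
  shows "L2_norm_sq a \<le> ennreal (1 + \<epsilon>) * L2_norm_sq b + ennreal (1 + 1/\<epsilon>) * L2_norm_sq (\<lambda>x. a x - b x)"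
proof -
  have "ennreal ((norm (a x))\<^sup>2) \<le> ennreal (1 + \<epsilon>) * ennreal ((norm (b x))\<^sup>2) + ennreal (1 + 1/\<epsilon>) * ennreal ((norm (a x - b x))\<^sup>2)" for x
  proof -
    have "(norm (a x))\<^sup>2 \<le> (norm (b x) + norm (a x - b x))\<^sup>2"
      using norm_triangle_ineq[of "b x" "a x - b x"] by (simp add: power_mono)
    also have "\<dots> \<le> (1 + \<epsilon>) * (norm (b x))\<^sup>2 + (1 + 1/\<epsilon>) * (norm (a x - b x))\<^sup>2"
      by (rule power2_add_le_eps[OF \<epsilon>])
    finally show ?thesis using \<epsilon> by (simp add: ennreal_leI ennreal_plus[symmetric] ennreal_mult[symmetric] del: ennreal_plus)
  qed
  then have "L2_norm_sq a \<le> (\<integral>\<^sup>+x. ennreal (1 + \<epsilon>) * ennreal ((norm (b x))\<^sup>2) + ennreal (1 + 1/\<epsilon>) * ennreal ((norm (a x - b x))\<^sup>2) \<partial>lborel)"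
    unfolding L2_norm_sq_def by (rule nn_integral_mono)
  also have "\<dots> = ennreal (1 + \<epsilon>) * L2_norm_sq b + ennreal (1 + 1/\<epsilon>) * L2_norm_sq (\<lambda>x. a x - b x)"
    unfolding L2_norm_sq_def by (simp add: nn_integral_add nn_integral_cmult)
  finally show ?thesis .
qed

lemma L2_norm_sq_diff_commute: "L2_norm_sq (\<lambda>x. a x - b x) = L2_norm_sq (\<lambda>x. b x - a x)"
  unfolding L2_norm_sq_def by (simp add: norm_minus_commute)

lemma L2_norm_sq_diff_finite:
  fixes a b :: "'a::euclidean_space \<Rightarrow> 'b::euclidean_space"
  assumes [measurable]: "a \<in> borel_measurable borel" "b \<in> borel_measurable borel"
    and "L2_norm_sq a < \<infinity>" "L2_norm_sq b < \<infinity>"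
  shows "L2_norm_sq (\<lambda>x. a x - b x) < \<infinity>"
proof -
  have "L2_norm_sq (\<lambda>x. a x - b x) \<le> 2 * L2_norm_sq a + 2 * L2_norm_sq b"
    using L2_norm_sq_le_eps[of "\<lambda>x. a x - b x" a 1] by (simp add: L2_norm_sq_def)
  also have "\<dots> < \<infinity>" using assms(3,4) by (simp add: ennreal_mult_less_top)
  finally show ?thesis .
qed

lemma le_add_mult_trans: "x \<le> a + c * y \<Longrightarrow> y \<le> z \<Longrightarrow> x \<le> a + c * (z::ennreal)"
  by (meson add_left_mono mult_left_mono order_trans zero_le)

lemma nonlocal_energy_close:
  fixes v w :: "'a::euclidean_space \<Rightarrow> real"
  assumes [measurable]: "h \<in> borel_measurable borel" "v \<in> borel_measurable borel" "w \<in> borel_measurable borel"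
    and h0: "\<And>t. h t \<ge> 0" and \<epsilon>: "\<epsilon> > 0" and E: "nonlocal_energy h (\<lambda>x. v x - w x) \<le> E"
  shows "nonlocal_energy h v \<le> ennreal (1 + \<epsilon>) * nonlocal_energy h w + ennreal (1 + 1/\<epsilon>) * E"
    and "nonlocal_energy h w \<le> ennreal (1 + \<epsilon>) * nonlocal_energy h v + ennreal (1 + 1/\<epsilon>) * E"
  using le_add_mult_trans[OF nonlocal_energy_le_eps[OF assms(1-3) h0 \<epsilon>] E]
    le_add_mult_trans[OF nonlocal_energy_le_eps[OF assms(1,3,2) h0 \<epsilon>] E[unfolded nonlocal_energy_diff_commute[of _ v]]]
  by auto

lemma L2_norm_sq_close:
  fixes a b :: "'a::euclidean_space \<Rightarrow> 'b::euclidean_space"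
  assumes [measurable]: "a \<in> borel_measurable borel" "b \<in> borel_measurable borel"
    and \<epsilon>: "\<epsilon> > 0" and E: "L2_norm_sq (\<lambda>x. a x - b x) \<le> E"
  shows "L2_norm_sq a \<le> ennreal (1 + \<epsilon>) * L2_norm_sq b + ennreal (1 + 1/\<epsilon>) * E"
    and "L2_norm_sq b \<le> ennreal (1 + \<epsilon>) * L2_norm_sq a + ennreal (1 + 1/\<epsilon>) * E"
  using le_add_mult_trans[OF L2_norm_sq_le_eps[OF assms(1,2) \<epsilon>] E]
    le_add_mult_trans[OF L2_norm_sq_le_eps[OF assms(2,1) \<epsilon>] E[unfolded L2_norm_sq_diff_commute[of a]]]
  by auto

lemma real_le_of_le_1_plus_eps:
  fixes x y :: real
  assumes "y \<ge> 0" "\<And>\<epsilon>. \<epsilon> > 0 \<Longrightarrow> x \<le> (1 + \<epsilon>) * y"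
  shows "x \<le> y"
proof (rule field_le_epsilon)
  fix e :: real assume e: "e > 0"
  have "x \<le> (1 + e / (y + 1)) * y" using assms(2)[of "e / (y + 1)"] e assms(1) by simp
  also have "\<dots> = y + e * (y / (y + 1))" using assms(1) by (simp add: field_simps)
  also have "\<dots> \<le> y + e * 1" using e assms(1) by (intro add_left_mono mult_left_mono) auto
  finally show "x \<le> y + e" by simp
qed

text \<open>The family of bounds \<open>x \<le> (1 + \<epsilon>) y + (1 + 1/\<epsilon>) z\<close> is the squared form of
  \<open>sqrt x \<le> sqrt y + sqrt z\<close>; the optimal choice is \<open>\<epsilon> = sqrt z / sqrt y\<close>.\<close>

lemma sqrt_le_sqrt_add_of_eps:
  fixes x y z :: real
  assumes "x \<ge> 0" "y \<ge> 0" "z \<ge> 0" "\<And>\<epsilon>. \<epsilon> > 0 \<Longrightarrow> x \<le> (1 + \<epsilon>) * y + (1 + 1/\<epsilon>) * z"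
  shows "sqrt x \<le> sqrt y + sqrt z"
proof -
  have "x \<le> (sqrt y + sqrt z)\<^sup>2"
  proof (cases "y = 0 \<or> z = 0")
    case True
    then show ?thesis
    proof
      assume "y = 0"
      then have "x \<le> (1 + \<epsilon>) * z" if "\<epsilon> > 0" for \<epsilon>
        using assms(4)[of "1/\<epsilon>"] that by (simp add: algebra_simps)
      then show ?thesis using \<open>y = 0\<close> assms real_le_of_le_1_plus_eps[of z x] by simp
    next
      assume "z = 0"
      then have "x \<le> (1 + \<epsilon>) * y" if "\<epsilon> > 0" for \<epsilon> using assms(4)[OF that] by simp
      then show ?thesis using \<open>z = 0\<close> assms real_le_of_le_1_plus_eps[of y x] by simp
    qed
  next
    case False
    then have yz: "y > 0" "z > 0" using assms by auto
    have "x \<le> (1 + sqrt z / sqrt y) * y + (1 + 1 / (sqrt z / sqrt y)) * z"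
      using yz by (intro assms(4)) simp
    also have "\<dots> = (sqrt y + sqrt z)\<^sup>2"
    proof -
      have sy: "sqrt y * sqrt y = y" "sqrt z * sqrt z = z" using yz by auto
      then have "(1 + sqrt z / sqrt y) * y + (1 + 1 / (sqrt z / sqrt y)) * z = y + sqrt z * sqrt y + z + sqrt y * sqrt z"
        using yz by (simp add: field_simps)
      then show ?thesis using sy by (simp add: power2_eq_square algebra_simps)
    qed
    finally show ?thesis .
  qed
  then show ?thesis using assms real_sqrt_le_mono[of x "(sqrt y + sqrt z)\<^sup>2"] by simp
qed

lemma sqrt_enn2real_le_of_eps:
  fixes X Y Z :: ennreal
  assumes "Y < \<infinity>" "Z < \<infinity>" "\<And>\<epsilon>. \<epsilon> > 0 \<Longrightarrow> X \<le> ennreal (1 + \<epsilon>) * Y + ennreal (1 + 1/\<epsilon>) * Z"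
  shows "X < \<infinity>" "sqrt (enn2real X) \<le> sqrt (enn2real Y) + sqrt (enn2real Z)"
proof -
  have "X \<le> ennreal (1 + 1) * Y + ennreal (1 + 1/1) * Z" using assms(3)[of 1] by simp
  also have "\<dots> < \<infinity>" using assms(1,2) by (simp add: ennreal_mult_less_top)
  finally show X: "X < \<infinity>" .
  show "sqrt (enn2real X) \<le> sqrt (enn2real Y) + sqrt (enn2real Z)"
  proof (rule sqrt_le_sqrt_add_of_eps)
    fix \<epsilon> :: real assume \<epsilon>: "\<epsilon> > 0"
    define r where "r = (1 + \<epsilon>) * enn2real Y + (1 + 1/\<epsilon>) * enn2real Z"
    have "r \<ge> 0" using \<epsilon> by (simp add: r_def)
    have "X \<le> ennreal r"
      using assms(1,2) assms(3)[OF \<epsilon>] \<epsilon> unfolding r_def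
      by (simp add: ennreal_mult ennreal_plus ennreal_enn2real_if less_top[symmetric])
    then show "enn2real X \<le> r"
      using \<open>r \<ge> 0\<close> by (metis enn2real_ennreal enn2real_mono ennreal_less_top)
  qed auto
qed

lemma LIMSEQ_of_uniform_approx:
  fixes s :: "nat \<Rightarrow> real" and t :: "nat \<Rightarrow> nat \<Rightarrow> real"
  assumes c: "c \<longlonglongrightarrow> 0" and st: "\<And>n k. \<bar>s k - t n k\<bar> \<le> c n"
    and t: "\<And>n. (\<lambda>k. t n k) \<longlonglongrightarrow> T n" and TS: "\<And>n. \<bar>T n - S\<bar> \<le> c n"
  shows "s \<longlonglongrightarrow> S"
proof (rule tendstoI)
  fix e :: real assume e: "e > 0"
  obtain n where n: "\<bar>c n\<bar> < e/3"
    using tendstoD[OF c, of "e/3"] e by (auto simp: eventually_sequentially dist_real_def)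
  have "eventually (\<lambda>k. dist (t n k) (T n) < e/3) sequentially"
    using tendstoD[OF t[of n], of "e/3"] e by simp
  then show "eventually (\<lambda>k. dist (s k) S < e) sequentially"
  proof eventually_elim
    case (elim k)
    have "\<bar>s k - S\<bar> \<le> \<bar>s k - t n k\<bar> + \<bar>t n k - T n\<bar> + \<bar>T n - S\<bar>" by linarith
    also have "\<dots> < e" using st[of k n] TS[of n] n elim by (simp add: dist_real_def)
    finally show ?case by (simp add: dist_real_def)
  qed
qed

lemma tendsto_of_sqrt_approx:
  fixes X :: "nat \<Rightarrow> ennreal" and Y :: "nat \<Rightarrow> nat \<Rightarrow> ennreal" and A E :: "nat \<Rightarrow> ennreal"
  assumes XY: "\<And>n k \<epsilon>. \<epsilon> > 0 \<Longrightarrow> X k \<le> ennreal (1 + \<epsilon>) * Y n k + ennreal (1 + 1/\<epsilon>) * E n"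
    and YX: "\<And>n k \<epsilon>. \<epsilon> > 0 \<Longrightarrow> Y n k \<le> ennreal (1 + \<epsilon>) * X k + ennreal (1 + 1/\<epsilon>) * E n"
    and AG: "\<And>n \<epsilon>. \<epsilon> > 0 \<Longrightarrow> A n \<le> ennreal (1 + \<epsilon>) * G + ennreal (1 + 1/\<epsilon>) * E n"
    and GA: "\<And>n \<epsilon>. \<epsilon> > 0 \<Longrightarrow> G \<le> ennreal (1 + \<epsilon>) * A n + ennreal (1 + 1/\<epsilon>) * E n"
    and Y: "\<And>n. (\<lambda>k. Y n k) \<longlonglongrightarrow> A n" and E: "E \<longlonglongrightarrow> 0"
    and Y_fin: "\<And>n k. Y n k < \<infinity>" and E_fin: "\<And>n. E n < \<infinity>" and G_fin: "G < \<infinity>"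
  shows "X \<longlonglongrightarrow> G"
proof -
  let ?r = "\<lambda>x. sqrt (enn2real x)"
  have A_fin: "A n < \<infinity>" for n using sqrt_enn2real_le_of_eps(1)[OF G_fin E_fin AG] .
  have X_fin: "X k < \<infinity>" for k using sqrt_enn2real_le_of_eps(1)[OF Y_fin E_fin XY] .
  have XY_r: "\<bar>?r (X k) - ?r (Y n k)\<bar> \<le> ?r (E n)" for n k
    using sqrt_enn2real_le_of_eps(2)[OF Y_fin E_fin XY, of k n] sqrt_enn2real_le_of_eps(2)[OF X_fin E_fin YX, of n k]
    by (simp add: abs_le_iff)
  have AG_r: "\<bar>?r (A n) - ?r G\<bar> \<le> ?r (E n)" for n
    using sqrt_enn2real_le_of_eps(2)[OF G_fin E_fin AG, of n] sqrt_enn2real_le_of_eps(2)[OF A_fin E_fin GA, of n]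
    by (simp add: abs_le_iff)
  have Y_r: "(\<lambda>k. ?r (Y n k)) \<longlonglongrightarrow> ?r (A n)" for n
  proof -
    have "(\<lambda>k. Y n k) \<longlonglongrightarrow> ennreal (enn2real (A n))" using Y[of n] A_fin[of n] by simp
    then have "(\<lambda>k. enn2real (Y n k)) \<longlonglongrightarrow> enn2real (A n)" by (rule tendsto_enn2real) simp
    then show ?thesis by (rule tendsto_real_sqrt)
  qed
  have E_r: "(\<lambda>n. ?r (E n)) \<longlonglongrightarrow> 0"
    using tendsto_real_sqrt[OF tendsto_enn2real[of E 0]] E by simp
  have "(\<lambda>k. ?r (X k)) \<longlonglongrightarrow> ?r G"
    by (rule LIMSEQ_of_uniform_approx[OF E_r XY_r Y_r AG_r])
  then have "(\<lambda>k. (?r (X k))\<^sup>2) \<longlonglongrightarrow> (?r G)\<^sup>2" by (rule tendsto_power)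
  then have "(\<lambda>k. ennreal (enn2real (X k))) \<longlonglongrightarrow> ennreal (enn2real G)" by (intro tendsto_ennrealI) simp
  moreover have "(\<lambda>k. ennreal (enn2real (X k))) = X" using X_fin by (auto simp: fun_eq_iff less_top)
  moreover have "ennreal (enn2real G) = G" using G_fin by (simp add: less_top)
  ultimately show ?thesis by simp
qed

lemma nonlocal_energy_le_liminf:
  fixes v :: "'a::euclidean_space \<Rightarrow> real" and vs :: "nat \<Rightarrow> 'a \<Rightarrow> real"
  assumes [measurable]: "h \<in> borel_measurable borel" "v \<in> borel_measurable borel" "\<And>m. vs m \<in> borel_measurable borel"
    and h0: "\<And>t. h t \<ge> 0"
    and ae: "AE x in lborel. (\<lambda>m. vs m x) \<longlonglongrightarrow> v x"
  shows "nonlocal_energy h v \<le> liminf (\<lambda>m. nonlocal_energy h (vs m))"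
proof -
  define F where "F w x y = ennreal ((w y - w x)\<^sup>2 * h (norm (y - x)))" for w :: "'a \<Rightarrow> real" and x y
  have Fm [measurable]: "(\<lambda>(x, y). F w x y) \<in> borel_measurable (lborel \<Otimes>\<^sub>M lborel)"
    if [measurable]: "w \<in> borel_measurable borel" for w
    unfolding F_def by measurable
  have Fm1 [measurable]: "(\<lambda>x. \<integral>\<^sup>+y. F w x y \<partial>lborel) \<in> borel_measurable lborel"
    if [measurable]: "w \<in> borel_measurable borel" for w
    by (rule lborel.borel_measurable_nn_integral) (use Fm[OF that] in simp)
  have Fm2 [measurable]: "F w x \<in> borel_measurable lborel" if [measurable]: "w \<in> borel_measurable borel" for w x
    unfolding F_def by measurable
  have inner: "(\<integral>\<^sup>+y. F v x y \<partial>lborel) \<le> liminf (\<lambda>m. \<integral>\<^sup>+y. F (vs m) x y \<partial>lborel)"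
    if x: "(\<lambda>m. vs m x) \<longlonglongrightarrow> v x" for x
  proof -
    have "AE y in lborel. F v x y = liminf (\<lambda>m. F (vs m) x y)"
      using ae
    proof eventually_elim
      case (elim y)
      have "(\<lambda>m. F (vs m) x y) \<longlonglongrightarrow> F v x y"
        unfolding F_def by (intro tendsto_ennrealI tendsto_intros elim x)
      then show ?case by (simp add: lim_imp_Liminf)
    qed
    then have "(\<integral>\<^sup>+y. F v x y \<partial>lborel) = (\<integral>\<^sup>+y. liminf (\<lambda>m. F (vs m) x y) \<partial>lborel)"
      by (rule nn_integral_cong_AE)
    also have "\<dots> \<le> liminf (\<lambda>m. \<integral>\<^sup>+y. F (vs m) x y \<partial>lborel)"
      by (rule nn_integral_liminf) simp
    finally show ?thesis .
  qed
  have "nonlocal_energy h v = (\<integral>\<^sup>+x. \<integral>\<^sup>+y. F v x y \<partial>lborel \<partial>lborel)" unfolding nonlocal_energy_def F_def ..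
  also have "\<dots> \<le> (\<integral>\<^sup>+x. liminf (\<lambda>m. \<integral>\<^sup>+y. F (vs m) x y \<partial>lborel) \<partial>lborel)"
    by (rule nn_integral_mono_AE) (use ae inner in \<open>auto elim!: eventually_mono\<close>)
  also have "\<dots> \<le> liminf (\<lambda>m. \<integral>\<^sup>+x. \<integral>\<^sup>+y. F (vs m) x y \<partial>lborel \<partial>lborel)"
    by (rule nn_integral_liminf) simp
  also have "\<dots> = liminf (\<lambda>m. nonlocal_energy h (vs m))" unfolding nonlocal_energy_def F_def ..
  finally show ?thesis .
qed

lemma L2_convergent_imp_AE_subseq:
  fixes f :: "nat \<Rightarrow> 'a \<Rightarrow> real"
  assumes [measurable]: "\<And>m. f m \<in> borel_measurable M" "u \<in> borel_measurable M"
    and lim: "(\<lambda>m. \<integral>\<^sup>+x. ennreal ((f m x - u x)\<^sup>2) \<partial>M) \<longlonglongrightarrow> 0"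
  shows "\<exists>r. strict_mono r \<and> (AE x in M. (\<lambda>m. f (r m) x) \<longlonglongrightarrow> u x)"
proof -
  have "eventually (\<lambda>m. (\<integral>\<^sup>+x. ennreal ((f m x - u x)\<^sup>2) \<partial>M) < 1) sequentially"
    using order_tendstoD(2)[OF lim] by simp
  then obtain N where N: "\<And>m. m \<ge> N \<Longrightarrow> (\<integral>\<^sup>+x. ennreal ((f m x - u x)\<^sup>2) \<partial>M) < 1"
    unfolding eventually_sequentially by blast
  define g where "g m x = (f (m + N) x - u x)\<^sup>2" for m x
  have gm [measurable]: "g m \<in> borel_measurable M" for m unfolding g_def by measurable
  have gint: "integrable M (g m)" for m
  proof (rule integrableI_nonneg)
    have "(\<integral>\<^sup>+x. ennreal (g m x) \<partial>M) < 1" unfolding g_def using N[of "m + N"] by simp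
    also have "(1::ennreal) < \<infinity>" by simp
    finally show "(\<integral>\<^sup>+x. ennreal (g m x) \<partial>M) < \<infinity>" .
  qed (auto simp: g_def)
  have eq: "ennreal (\<integral>x. norm (g m x) \<partial>M) = (\<integral>\<^sup>+x. ennreal ((f (m + N) x - u x)\<^sup>2) \<partial>M)" for m
  proof -
    have "(\<integral>x. norm (g m x) \<partial>M) = (\<integral>x. g m x \<partial>M)" unfolding g_def by simp
    moreover have "(\<integral>\<^sup>+x. ennreal (g m x) \<partial>M) = ennreal (\<integral>x. g m x \<partial>M)"
      by (rule nn_integral_eq_integral[OF gint]) (auto simp: g_def)
    ultimately show ?thesis unfolding g_def by simp
  qed
  have "(\<lambda>m. ennreal (\<integral>x. norm (g m x) \<partial>M)) \<longlonglongrightarrow> ennreal 0"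
    unfolding eq using LIMSEQ_ignore_initial_segment[OF lim, of N] by simp
  then have "(\<lambda>m. \<integral>x. norm (g m x) \<partial>M) \<longlonglongrightarrow> 0"
    by (rule tendsto_ennrealD) auto
  then obtain r where r: "strict_mono r" "AE x in M. (\<lambda>m. g (r m) x) \<longlonglongrightarrow> 0"
    using tendsto_L1_AE_subseq[of M g] gint by blast
  have "AE x in M. (\<lambda>m. f (r m + N) x) \<longlonglongrightarrow> u x"
    using r(2)
  proof eventually_elim
    case (elim x)
    then have "(\<lambda>m. sqrt (g (r m) x)) \<longlonglongrightarrow> sqrt 0" by (intro tendsto_real_sqrt)
    then have "(\<lambda>m. \<bar>f (r m + N) x - u x\<bar>) \<longlonglongrightarrow> 0" unfolding g_def by simp
    then have "(\<lambda>m. f (r m + N) x - u x) \<longlonglongrightarrow> 0" by (simp add: tendsto_rabs_zero_iff)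
    then show ?case by (rule LIM_zero_cancel)
  qed
  moreover have "strict_mono (\<lambda>m. r m + N)" using r(1) by (simp add: strict_mono_def)
  ultimately show ?thesis by blast
qed

lemma nonlocal_energy_approx_remainder:
  fixes \<phi> :: "nat \<Rightarrow> 'a::euclidean_space \<Rightarrow> real" and a :: "nat \<Rightarrow> 'a \<Rightarrow> 'a"
  assumes [measurable]: "h \<in> borel_measurable borel" "u \<in> borel_measurable borel" "g \<in> borel_measurable borel"
    and h0: "\<And>t. h t \<ge> 0" and m1: "\<And>i::'a. i \<in> Basis \<Longrightarrow> radial_moment h i \<le> 1"
    and C1: "\<And>m. C1_compact_support (\<phi> m) (a m)"
    and L2: "(\<lambda>m. \<integral>\<^sup>+x. ennreal ((\<phi> m x - u x)\<^sup>2) \<partial>lborel) \<longlonglongrightarrow> 0"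
    and grad: "(\<lambda>m. L2_norm_sq (\<lambda>x. a m x - g x)) \<longlonglongrightarrow> 0"
  shows "nonlocal_energy h (\<lambda>x. u x - \<phi> n x) \<le> 2 * L2_norm_sq (\<lambda>x. a n x - g x)"
proof -
  define e where "e m = L2_norm_sq (\<lambda>x. a m x - g x)" for m
  have [measurable]: "\<phi> m \<in> borel_measurable borel" "a m \<in> borel_measurable borel" for m
    using C1_compact_support_measurable[OF C1] by auto
  obtain r where r: "strict_mono r" "AE x in lborel. (\<lambda>m. \<phi> (r m) x) \<longlonglongrightarrow> u x"
    using L2_convergent_imp_AE_subseq[OF _ _ L2] by auto
  have "nonlocal_energy h (\<lambda>x. u x - \<phi> n x) \<le> liminf (\<lambda>m. nonlocal_energy h (\<lambda>x. \<phi> (r m) x - \<phi> n x))"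
    by (rule nonlocal_energy_le_liminf[OF _ _ _ h0]) (use r(2) in \<open>auto elim!: eventually_mono intro: tendsto_diff\<close>)
  also have "\<dots> \<le> liminf (\<lambda>m. 2 * e (r m) + 2 * e n)"
  proof (intro Liminf_mono always_eventually allI)
    fix m
    have "nonlocal_energy h (\<lambda>x. \<phi> (r m) x - \<phi> n x) \<le> L2_norm_sq (\<lambda>x. a (r m) x - a n x)"
      by (rule nonlocal_energy_le_L2_norm_sq[OF _ h0 m1 C1_compact_support_diff[OF C1 C1]]) simp
    also have "\<dots> \<le> ennreal (1 + 1) * e (r m) + ennreal (1 + 1/1) * L2_norm_sq (\<lambda>x. g x - a n x)"
      using L2_norm_sq_le_eps[of "\<lambda>x. a (r m) x - a n x" "\<lambda>x. a (r m) x - g x" 1] by (simp add: e_def)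
    also have "L2_norm_sq (\<lambda>x. g x - a n x) = e n"
      unfolding e_def by (rule L2_norm_sq_diff_commute)
    finally show "nonlocal_energy h (\<lambda>x. \<phi> (r m) x - \<phi> n x) \<le> 2 * e (r m) + 2 * e n" by simp
  qed
  also have "\<dots> = 2 * e n"
  proof (rule lim_imp_Liminf)
    have "(\<lambda>m. e (r m)) \<longlonglongrightarrow> 0"
      using LIMSEQ_subseq_LIMSEQ[OF grad r(1)] by (simp add: e_def o_def)
    then have "(\<lambda>m. 2 * e (r m) + 2 * e n) \<longlonglongrightarrow> 2 * 0 + 2 * e n"
      by (intro tendsto_add tendsto_const ennreal_tendsto_cmult) auto
    then show "(\<lambda>m. 2 * e (r m) + 2 * e n) \<longlonglongrightarrow> 2 * e n" by simp
  qed simp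
  finally show ?thesis by (simp add: e_def)
qed

lemma H10_approximation:
  fixes g :: "'a::euclidean_space \<Rightarrow> 'a"
  assumes "H10 \<Omega> u g"
  obtains \<phi> where "\<And>n. C1_compact_support (\<phi> n) (grad (\<phi> n))"
    "(\<lambda>n. \<integral>\<^sup>+x. ennreal ((\<phi> n x - u x)\<^sup>2) \<partial>lborel) \<longlonglongrightarrow> 0"
    "(\<lambda>n. L2_norm_sq (\<lambda>x. grad (\<phi> n) x - g x)) \<longlonglongrightarrow> 0"
    "u \<in> borel_measurable borel" "g \<in> borel_measurable borel"
  using assms test_fun_C1_compact_support unfolding H10_def L2_norm_sq_def by auto

lemma H10_L2_norm_sq_finite:
  fixes g :: "'a::euclidean_space \<Rightarrow> 'a"
  assumes "H10 \<Omega> u g"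
  shows "L2_norm_sq g < \<infinity>"
proof -
  obtain \<phi> where C1: "\<And>n. C1_compact_support (\<phi> n) (grad (\<phi> n))"
    and grad: "(\<lambda>n. L2_norm_sq (\<lambda>x. grad (\<phi> n) x - g x)) \<longlonglongrightarrow> 0"
    and [measurable]: "g \<in> borel_measurable borel"
    using H10_approximation[OF assms] by metis
  obtain n where n: "L2_norm_sq (\<lambda>x. grad (\<phi> n) x - g x) < 1"
    using order_tendstoD(2)[OF grad, of 1] by (auto simp: eventually_sequentially)
  have [measurable]: "grad (\<phi> n) \<in> borel_measurable borel"
    using C1_compact_support_measurable[OF C1] by auto
  have "L2_norm_sq g \<le> 2 * L2_norm_sq (grad (\<phi> n)) + 2 * L2_norm_sq (\<lambda>x. grad (\<phi> n) x - g x)"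
    using L2_norm_sq_le_eps[of g "grad (\<phi> n)" 1] by (simp add: L2_norm_sq_diff_commute[of g])
  also have "\<dots> < \<infinity>"
    using C1_compact_support_L2_finite[OF C1] n by (simp add: ennreal_mult_less_top order_less_trans[OF _ ennreal_less_top[of 1]])
  finally show ?thesis .
qed

lemma nonlocal_energy_tendsto_H10:
  fixes h :: "nat \<Rightarrow> real \<Rightarrow> real" and \<delta> :: "nat \<Rightarrow> real" and g :: "'a::euclidean_space \<Rightarrow> 'a"
  assumes [measurable]: "\<And>k. h k \<in> borel_measurable borel" and h0: "\<And>k t. h k t \<ge> 0"
    and m1: "\<And>k i::'a. i \<in> Basis \<Longrightarrow> radial_moment (h k) i \<le> 1"
    and m_lim: "\<And>i::'a. i \<in> Basis \<Longrightarrow> (\<lambda>k. radial_moment (h k) i) \<longlonglongrightarrow> 1"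
    and supp: "\<And>k t. t > \<delta> k \<Longrightarrow> h k t = 0" and \<delta>: "\<delta> \<longlonglongrightarrow> 0"
    and H: "H10 \<Omega> u g"
  shows "(\<lambda>k. nonlocal_energy (h k) u) \<longlonglongrightarrow> L2_norm_sq g"
proof -
  obtain \<phi> where C1: "\<And>n. C1_compact_support (\<phi> n) (grad (\<phi> n))"
    and L2: "(\<lambda>n. \<integral>\<^sup>+x. ennreal ((\<phi> n x - u x)\<^sup>2) \<partial>lborel) \<longlonglongrightarrow> 0"
    and grad: "(\<lambda>n. L2_norm_sq (\<lambda>x. grad (\<phi> n) x - g x)) \<longlonglongrightarrow> 0"
    and [measurable]: "u \<in> borel_measurable borel" "g \<in> borel_measurable borel"
    by (erule H10_approximation[OF H])
  have [measurable]: "\<phi> n \<in> borel_measurable borel" "grad (\<phi> n) \<in> borel_measurable borel" for n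
    using C1_compact_support_measurable[OF C1] by auto
  define e where "e n = L2_norm_sq (\<lambda>x. grad (\<phi> n) x - g x)" for n
  have G_fin: "L2_norm_sq g < \<infinity>" by (rule H10_L2_norm_sq_finite[OF H])
  have e_fin: "2 * e n < \<infinity>" for n
    using L2_norm_sq_diff_finite[OF _ _ C1_compact_support_L2_finite[OF C1] G_fin]
    by (simp add: e_def ennreal_mult_less_top)
  have rem: "nonlocal_energy (h k) (\<lambda>x. u x - \<phi> n x) \<le> 2 * e n" for k n
    unfolding e_def by (rule nonlocal_energy_approx_remainder[OF _ _ _ h0 m1 C1 L2 grad]) auto
  have e_le: "e n \<le> 2 * e n" for n
    by (metis mult_2 add_increasing2 order_refl zero_le)
  have Y_lim: "(\<lambda>k. nonlocal_energy (h k) (\<phi> n)) \<longlonglongrightarrow> L2_norm_sq (grad (\<phi> n))" for n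
    using nonlocal_energy_tendsto_L2_norm_sq[OF _ h0 m1 m_lim supp \<delta> C1] by simp
  have e_lim: "(\<lambda>n. 2 * e n) \<longlonglongrightarrow> 0"
    using ennreal_tendsto_cmult[of 2 e 0] grad unfolding e_def[abs_def] by simp
  have Y_fin: "nonlocal_energy (h k) (\<phi> n) < \<infinity>" for n k
    using le_less_trans[OF nonlocal_energy_le_L2_norm_sq[OF _ h0 m1 C1] C1_compact_support_L2_finite[OF C1]]
    by simp
  show ?thesis
  proof (rule tendsto_of_sqrt_approx[OF _ _ _ _ Y_lim e_lim Y_fin e_fin G_fin])
    fix n k and \<epsilon> :: real assume \<epsilon>: "\<epsilon> > 0"
    note energy = nonlocal_energy_close[of "h k" u "\<phi> n", OF _ _ _ h0 \<epsilon> rem]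
    note L2 = L2_norm_sq_close[of "grad (\<phi> n)" g, OF _ _ \<epsilon> e_le[unfolded e_def]]
    show "nonlocal_energy (h k) u \<le> ennreal (1 + \<epsilon>) * nonlocal_energy (h k) (\<phi> n) + ennreal (1 + 1/\<epsilon>) * (2 * e n)"
      using energy(1) by simp
    show "nonlocal_energy (h k) (\<phi> n) \<le> ennreal (1 + \<epsilon>) * nonlocal_energy (h k) u + ennreal (1 + 1/\<epsilon>) * (2 * e n)"
      using energy(2) by simp
    show "L2_norm_sq (grad (\<phi> n)) \<le> ennreal (1 + \<epsilon>) * L2_norm_sq g + ennreal (1 + 1/\<epsilon>) * (2 * e n)"
      using L2(1) by (simp add: e_def)
    show "L2_norm_sq g \<le> ennreal (1 + \<epsilon>) * L2_norm_sq (grad (\<phi> n)) + ennreal (1 + 1/\<epsilon>) * (2 * e n)"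
      using L2(2) by (simp add: e_def)
  qed
qed

lemma H10_gradient_zero_outside:
  fixes \<Omega> :: "'a::euclidean_space set"
  assumes H: "H10 \<Omega> u g" and op: "open \<Omega>"
  shows "AE x in lborel. x \<notin> \<Omega> \<longrightarrow> g x = 0"
proof -
  obtain \<phi> where \<phi>: "\<And>n. test_fun \<Omega> (\<phi> n)"
    and G2: "(\<lambda>n. \<integral>\<^sup>+ x. ennreal ((norm (grad (\<phi> n) x - g x))\<^sup>2) \<partial>lborel) \<longlonglongrightarrow> 0"
    and gm: "g \<in> borel_measurable lborel"
    using H unfolding H10_def by blast
  have [measurable]: "g \<in> borel_measurable borel" using gm by simp
  have [measurable]: "\<Omega> \<in> sets borel" using op by simp
  have le: "(\<integral>\<^sup>+x. ennreal ((norm (g x))\<^sup>2) * indicator (- \<Omega>) x \<partial>lborel) \<le> (\<integral>\<^sup>+ x. ennreal ((norm (grad (\<phi> n) x - g x))\<^sup>2) \<partial>lborel)" for n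
  proof (intro nn_integral_mono)
    fix x
    show "ennreal ((norm (g x))\<^sup>2) * indicator (- \<Omega>) x \<le> ennreal ((norm (grad (\<phi> n) x - g x))\<^sup>2)"
    proof (cases "x \<in> \<Omega>")
      case False
      have "closure {x. \<phi> n x \<noteq> 0} \<subseteq> \<Omega>" using \<phi>[of n] unfolding test_fun_def by auto
      then have "grad (\<phi> n) x = 0" using False by (intro grad_eq_0_outside_support) auto
      then show ?thesis using False by simp
    qed simp
  qed
  have "(\<integral>\<^sup>+x. ennreal ((norm (g x))\<^sup>2) * indicator (- \<Omega>) x \<partial>lborel) \<le> 0"
    by (rule LIMSEQ_le_const[OF G2]) (use le in blast)
  then have "(\<integral>\<^sup>+x. ennreal ((norm (g x))\<^sup>2) * indicator (- \<Omega>) x \<partial>lborel) = 0" by simp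
  then have "AE x in lborel. ennreal ((norm (g x))\<^sup>2) * indicator (- \<Omega>) x = 0"
    by (subst (asm) nn_integral_0_iff_AE) (auto intro!: borel_measurable_indicator)
  then show ?thesis by (rule eventually_mono) (auto simp: indicator_def split: if_splits)
qed

lemma H10_L2_norm_sq_restrict:
  fixes g :: "'a::euclidean_space \<Rightarrow> 'a"
  assumes "H10 \<Omega> u g" "open \<Omega>" "\<Omega> \<subseteq> D"
  shows "(\<integral>\<^sup>+x. ennreal ((norm (g x))\<^sup>2) * indicator D x \<partial>lborel) = L2_norm_sq g"
  unfolding L2_norm_sq_def
proof (rule nn_integral_cong_AE)
  show "AE x in lborel. ennreal ((norm (g x))\<^sup>2) * indicator D x = ennreal ((norm (g x))\<^sup>2)"
    using H10_gradient_zero_outside[OF assms(1,2)] by eventually_elim (use assms(3) in \<open>auto simp: indicator_def\<close>)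
qed

lemma infdist_frontier_lt:
  fixes \<Omega> :: "'a::euclidean_space set"
  assumes "open \<Omega>" "x \<in> \<Omega>" "y \<notin> \<Omega>" "norm (y - x) \<le> r"
  shows "infdist y (frontier \<Omega>) < r"
proof -
  obtain p where p: "p \<in> closed_segment x y" "p \<in> frontier \<Omega>"
    using connected_Int_frontier[of "closed_segment x y" \<Omega>] assms by auto
  obtain t where t: "0 \<le> t" "t \<le> 1" "p = (1 - t) *\<^sub>R x + t *\<^sub>R y" using p(1) unfolding in_segment by blast
  have "t \<noteq> 0" using t p(2) assms(1,2) by (auto simp: frontier_def interior_open)
  have "y - p = (1 - t) *\<^sub>R (y - x)" unfolding t(3) by (simp add: algebra_simps)
  then have "dist y p = (1 - t) * norm (y - x)" using t by (simp add: dist_norm)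
  also have "\<dots> < norm (y - x)" using t \<open>t \<noteq> 0\<close> assms(2,3) by (auto simp: mult_less_cancel_right2)
  finally show ?thesis using infdist_le[OF p(2), of y] assms(4) by simp
qed

lemma nonlocal_energy_restrict:
  fixes u :: "'a::euclidean_space \<Rightarrow> real"
  assumes u0: "\<And>x. x \<notin> \<Omega> \<Longrightarrow> u x = 0" and supp: "\<And>t. t > r \<Longrightarrow> h t = 0"
    and D: "\<And>x y. x \<in> \<Omega> \<Longrightarrow> norm (y - x) \<le> r \<Longrightarrow> y \<in> D"
  shows "(\<integral>\<^sup>+x. (\<integral>\<^sup>+y. ennreal ((u y - u x)\<^sup>2 * h (norm (y - x))) * indicator D y \<partial>lborel) * indicator D x \<partial>lborel) =
    nonlocal_energy h u"
proof -
  have "ennreal ((u y - u x)\<^sup>2 * h (norm (y - x))) * indicator D y * indicator D x =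
      ennreal ((u y - u x)\<^sup>2 * h (norm (y - x)))" for x y
  proof (cases "(u y - u x)\<^sup>2 * h (norm (y - x)) = 0")
    case False
    then have "norm (y - x) \<le> r" "x \<in> \<Omega> \<or> y \<in> \<Omega>"
      using supp[of "norm (y - x)"] u0[of x] u0[of y] by force+
    moreover have "r \<ge> 0" using \<open>norm (y - x) \<le> r\<close> norm_ge_zero order_trans by blast
    ultimately have "x \<in> D \<and> y \<in> D"
      using D[of x y] D[of x x] D[of y x] D[of y y] by (auto simp: norm_minus_commute)
    then show ?thesis by simp
  qed (simp only: ennreal_0 mult_zero_left)
  moreover have "(\<integral>\<^sup>+y. f y \<partial>lborel) * indicator D x = (\<integral>\<^sup>+y. f y * indicator D x \<partial>lborel)" for f :: "'a \<Rightarrow> ennreal" and x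
    by (simp split: split_indicator)
  ultimately show ?thesis
    unfolding nonlocal_energy_def by simp
qed

lemma radial_moment_truncated:
  "radial_moment (\<lambda>t. g t * indicator {0..r} t) i =
    (\<integral>\<^sup>+z. ennreal ((z \<bullet> i)\<^sup>2 * g (norm z)) * indicator (cball 0 r) z \<partial>lborel)"
  unfolding radial_moment_def by (intro nn_integral_cong) (auto simp: indicator_def mult_ac)

lemma radial_moment_truncated_le:
  assumes "\<And>t. g t \<ge> 0" "\<And>t. t > \<delta> \<Longrightarrow> g t = 0"
  shows "radial_moment (\<lambda>t. g t * indicator {0..r} t) i \<le> radial_moment (\<lambda>t. g t * indicator {0..\<delta>} t) i"
  unfolding radial_moment_def using assms
  by (intro nn_integral_mono ennreal_leI mult_right_mono) (auto simp: indicator_def not_le)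

theorem theoremA2:
  fixes \<Omega> :: "'a::euclidean_space set"
    and \<delta> :: "nat \<Rightarrow> real" and \<delta>0 :: real
    and gt :: "nat \<Rightarrow> real \<Rightarrow> real"
    and P :: "nat \<Rightarrow> 'a \<Rightarrow> 'a set"
    and rlow :: "nat \<Rightarrow> real"
    and u :: "'a \<Rightarrow> real" and g :: "'a \<Rightarrow> 'a"
    and D :: "'a set"
  assumes \<Omega>: "bounded \<Omega>" "open \<Omega>"
    and \<delta>_pos: "\<And>k. \<delta> k > 0"
    and \<delta>_dec: "decseq \<delta>"
    and \<delta>_lim: "\<delta> \<longlonglongrightarrow> 0"
    and \<delta>_le: "\<And>k. \<delta> k \<le> \<delta>0"
    and D_def: "D = \<Omega> \<union> {y. y \<notin> \<Omega> \<and> infdist y (frontier \<Omega>) < \<delta>0}"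
    and gt_meas: "\<And>k. gt k \<in> borel_measurable borel"
    and gt_nonneg: "\<And>k t. gt k t \<ge> 0"
    and gt_pos: "\<And>k t. 0 \<le> t \<Longrightarrow> t < \<delta> k \<Longrightarrow> gt k t > 0"
    and gt_zero: "\<And>k t. t > \<delta> k \<Longrightarrow> gt k t = 0"
    and gt_moment: "\<And>k i. i \<in> Basis \<Longrightarrow>
       (\<integral>\<^sup>+ (z::'a). ennreal ((z \<bullet> i)\<^sup>2 * gt k (norm z)) * indicator (cball 0 (\<delta> k)) z \<partial>lborel) = 1"
    and P_poly: "\<And>k x. x \<in> \<Omega> \<Longrightarrow> polytope (P k x) \<and> P k x \<subseteq> cball x (\<delta> k)"
    and rlow_def: "\<And>k. rlow k = Inf ((\<lambda>x. inner_radius x (P k x)) ` \<Omega>)"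
    and r_moment: "\<And>i. i \<in> Basis \<Longrightarrow>
       (\<lambda>k. \<integral>\<^sup>+ (z::'a). ennreal ((z \<bullet> i)\<^sup>2 * gt k (norm z)) * indicator (cball 0 (rlow k)) z \<partial>lborel)
         \<longlonglongrightarrow> 1"
    and u_H10: "H10 \<Omega> u g"
    and u_ext: "\<And>x. x \<notin> \<Omega> \<Longrightarrow> u x = 0"
  shows "(\<lambda>k. \<integral>\<^sup>+ x. (\<integral>\<^sup>+ y.
            ennreal ((u y - u x)\<^sup>2 * gt k (norm (y - x)) * indicator {0..rlow k} (norm (y - x)))
              * indicator D y \<partial>lborel) * indicator D x \<partial>lborel)
         \<longlonglongrightarrow> (\<integral>\<^sup>+ x. ennreal ((norm (g x))\<^sup>2) * indicator D x \<partial>lborel)"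
proof -
  define h where "h k t = gt k t * indicator {0..rlow k} t" for k t
  have [measurable]: "h k \<in> borel_measurable borel" for k
    using gt_meas[of k] unfolding h_def by measurable
  have h_nonneg: "h k t \<ge> 0" for k t using gt_nonneg by (simp add: h_def)
  have h_zero: "h k t = 0" if "t > \<delta> k" for k t using gt_zero[OF that] by (simp add: h_def)
  have m1: "radial_moment (h k) i \<le> 1" if "i \<in> Basis" for k and i :: 'a
    using radial_moment_truncated_le[of "gt k" "\<delta> k" "rlow k" i, OF gt_nonneg gt_zero] gt_moment[OF that, of k]
    unfolding h_def[abs_def] radial_moment_truncated by simp
  have m_lim: "(\<lambda>k. radial_moment (h k) i) \<longlonglongrightarrow> 1" if "i \<in> Basis" for i :: 'a
    using r_moment[OF that] unfolding h_def[abs_def] radial_moment_truncated .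
  have neighbourhood: "y \<in> D" if "x \<in> \<Omega>" "norm (y - x) \<le> \<delta>0" for x y
    using infdist_frontier_lt[OF \<Omega>(2) that(1) _ that(2)] that(1) unfolding D_def by blast
  have integrand: "(u y - u x)\<^sup>2 * gt k (norm (y - x)) * indicator {0..rlow k} (norm (y - x)) =
      (u y - u x)\<^sup>2 * h k (norm (y - x))" for k x y
    by (simp add: h_def)
  have h_beyond: "h k t = 0" if "t > \<delta>0" for k t using h_zero \<delta>_le[of k] that by simp
  have LHS: "(\<integral>\<^sup>+ x. (\<integral>\<^sup>+ y.
            ennreal ((u y - u x)\<^sup>2 * gt k (norm (y - x)) * indicator {0..rlow k} (norm (y - x)))
              * indicator D y \<partial>lborel) * indicator D x \<partial>lborel) = nonlocal_energy (h k) u" for k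
    unfolding integrand by (rule nonlocal_energy_restrict[of \<Omega> u \<delta>0 "h k" D, OF u_ext h_beyond neighbourhood])
  have RHS: "(\<integral>\<^sup>+ x. ennreal ((norm (g x))\<^sup>2) * indicator D x \<partial>lborel) = L2_norm_sq g"
    by (rule H10_L2_norm_sq_restrict[OF u_H10 \<Omega>(2)]) (auto simp: D_def)
  show ?thesis
    unfolding LHS RHS by (rule nonlocal_energy_tendsto_H10[OF _ h_nonneg m1 m_lim h_zero \<delta>_lim u_H10]) simp
qed

end
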